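(* Let $\bm A=(A_1,\dots,A_d)$ be Hermitian matrices in $M_n(\mathbb{C})$, $B\in M_n(\mathbb{C})$, and $(\bm\lambda,\nu)\in\mathbb{R}^d\times\mathbb{C}$. Then $$\left|\dot\mu^{C}_{(\bm\lambda,\nu)}(\bm A,B)-\mu^{Q}_{(\bm\lambda,\nu)}(\bm A,B)\right|\le\sqrt{\sum_{i<j}\|[A_i,A_j]\|+\|F_{(\bm\lambda,\nu)}(\bm A,B)\|}.$$
   Context: Let $n,d,m$ be positive integers. Fix Hermitian matrices $\Gamma_1,\dots,\Gamma_d\in M_{2m}(\mathbb{C})$ with $\Gamma_i^2=I_{2m}$ and $\Gamma_i\Gamma_j=-\Gamma_j\Gamma_i$ for $i\neq j$ (a Clifford representation; the paper uses a specific one built from Pauli matrices). Write $P=\begin{bmatrix} I_m&0\\0&0_m\end{bmatrix}$ and $Q=\begin{bmatrix}0_m&0\\0&I_m\end{bmatrix}$ in $M_{2m}(\mathbb{C})$. For a $d$-tuple $\bm A=(A_1,\dots,A_d)$ of Hermitian matrices in $M_n(\mathbb{C})$, a matrix $B\in M_n(\mathbb{C})$ (not necessarily Hermitian or normal), and a probe site $(\bm\lambda,\nu)\in\mathbb{R}^d\times\mathbb{C}$, the non-Hermitian spectral localizer is $$L_{(\bm\lambda,\nu)}(\bm A,B)=\sum_{i=1}^d (A_i-\lambda_i I)\otimes\Gamma_i+(B-\nu I)\otimes P-(B-\nu I)^\dagger\otimes Q\in M_{2mn}(\mathbb{C}).$$ The Clifford radial gap is $\dot\mu^{C}_{(\bm\lambda,\nu)}(\bm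 A,B)=\sigma_{\min}\big(L_{(\bm\lambda,\nu)}(\bm A,B)\big)$. Define $$F_{(\bm\lambda,\nu)}(\bm A,B)=\sum_{i=1}^d\big(G_i+G_i^\dagger\big)-\sum_{i=1}^d\big(H_i+H_i^\dagger\big),\quad G_i=(A_i-\lambda_i I)(B-\nu I)\otimes\Gamma_iP,\quad H_i=(A_i-\lambda_i I)(B-\nu I)^\dagger\otimes\Gamma_iQ.$$ The quadratic gap (with one non-Hermitian matrix) is $\mu^{Q}_{(\bm\lambda,\nu)}(\bm A,B)=\sqrt{\lambda_{\min}(Q_{(\bm\lambda,\nu)}(\bm A,B))}$, where $Q_{(\bm\lambda,\nu)}(\bm A,B)=RQ\otimes\begin{bmatrix}1&0\\0&0\end{bmatrix}+LQ\otimes\begin{bmatrix}0&0\\0&1\end{bmatrix}$ with $RQ=\sum_{i=1}^d(A_i-\lambda_iI)^2+(B-\nu I)^\dagger(B-\nu I)$ and $LQ=\sum_{i=1}^d(A_i-\lambda_iI)^2+(B-\nu I)(B-\nu I)^\dagger$. Matrix norms are operator norms. *)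

theory Defs
  imports "Jordan_Normal_Form.Matrix" "Jordan_Normal_Form.Char_Poly"
begin

definition adj :: "complex mat \<Rightarrow> complex mat" where
  "adj M = mat (dim_col M) (dim_row M) (\<lambda>(i,j). cnj (M $$ (j,i)))"

definition hermitian :: "complex mat \<Rightarrow> bool" where
  "hermitian M \<longleftrightarrow> dim_row M = dim_col M \<and> adj M = M"

text \<open>Kronecker (tensor) product, first factor is the outer (block) index.\<close>
definition kron :: "complex mat \<Rightarrow> complex mat \<Rightarrow> complex mat" where
  "kron M N = mat (dim_row M * dim_row N) (dim_col M * dim_col N)
     (\<lambda>(i,j). M $$ (i div dim_row N, j div dim_col N) * N $$ (i mod dim_row N, j mod dim_col N))"

fun msum :: "nat \<Rightarrow> nat \<Rightarrow> (nat \<Rightarrow> complex mat) \<Rightarrow> nat \<Rightarrow> complex mat" where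
  "msum r c f 0 = 0\<^sub>m r c"
| "msum r c f (Suc k) = msum r c f k + f k"

definition vnorm :: "complex vec \<Rightarrow> real" where
  "vnorm v = sqrt (\<Sum>i<dim_vec v. (cmod (v $ i))\<^sup>2)"

definition opnorm :: "complex mat \<Rightarrow> real" where
  "opnorm M = Sup {vnorm (M *\<^sub>v v) | v. v \<in> carrier_vec (dim_col M) \<and> vnorm v = 1}"

text \<open>Smallest eigenvalue of a Hermitian matrix (eigenvalues are real).\<close>
definition lambda_min :: "complex mat \<Rightarrow> real" where
  "lambda_min M = Min {Re k | k. eigenvalue M k}"

definition sigma_min :: "complex mat \<Rightarrow> real" where
  "sigma_min M = sqrt (lambda_min (adj M * M))"

definition projP :: "nat \<Rightarrow> complex mat" where
  "projP m = mat (2*m) (2*m) (\<lambda>(i,j). if i = j \<and> i < m then 1 else 0)"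

definition projQ :: "nat \<Rightarrow> complex mat" where
  "projQ m = mat (2*m) (2*m) (\<lambda>(i,j). if i = j \<and> m \<le> i then 1 else 0)"

definition clifford_rep :: "nat \<Rightarrow> nat \<Rightarrow> (nat \<Rightarrow> complex mat) \<Rightarrow> bool" where
  "clifford_rep d m \<Gamma> \<longleftrightarrow>
     (\<forall>i<d. \<Gamma> i \<in> carrier_mat (2*m) (2*m) \<and> hermitian (\<Gamma> i) \<and> \<Gamma> i * \<Gamma> i = 1\<^sub>m (2*m)) \<and>
     (\<forall>i<d. \<forall>j<d. i \<noteq> j \<longrightarrow> \<Gamma> i * \<Gamma> j = - (\<Gamma> j * \<Gamma> i))"

definition shiftA :: "nat \<Rightarrow> (nat \<Rightarrow> complex mat) \<Rightarrow> (nat \<Rightarrow> real) \<Rightarrow> nat \<Rightarrow> complex mat" where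
  "shiftA n A lam i = A i - complex_of_real (lam i) \<cdot>\<^sub>m 1\<^sub>m n"

definition shiftB :: "nat \<Rightarrow> complex mat \<Rightarrow> complex \<Rightarrow> complex mat" where
  "shiftB n B nu = B - nu \<cdot>\<^sub>m 1\<^sub>m n"

definition localizer ::
  "nat \<Rightarrow> nat \<Rightarrow> nat \<Rightarrow> (nat \<Rightarrow> complex mat) \<Rightarrow> (nat \<Rightarrow> complex mat) \<Rightarrow> complex mat
   \<Rightarrow> (nat \<Rightarrow> real) \<Rightarrow> complex \<Rightarrow> complex mat" where
  "localizer n d m \<Gamma> A B lam nu =
     msum (2*m*n) (2*m*n) (\<lambda>i. kron (shiftA n A lam i) (\<Gamma> i)) d
     + kron (shiftB n B nu) (projP m) - kron (adj (shiftB n B nu)) (projQ m)"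

definition clifford_gap ::
  "nat \<Rightarrow> nat \<Rightarrow> nat \<Rightarrow> (nat \<Rightarrow> complex mat) \<Rightarrow> (nat \<Rightarrow> complex mat) \<Rightarrow> complex mat
   \<Rightarrow> (nat \<Rightarrow> real) \<Rightarrow> complex \<Rightarrow> real" where
  "clifford_gap n d m \<Gamma> A B lam nu = sigma_min (localizer n d m \<Gamma> A B lam nu)"

definition Fmat ::
  "nat \<Rightarrow> nat \<Rightarrow> nat \<Rightarrow> (nat \<Rightarrow> complex mat) \<Rightarrow> (nat \<Rightarrow> complex mat) \<Rightarrow> complex mat
   \<Rightarrow> (nat \<Rightarrow> real) \<Rightarrow> complex \<Rightarrow> complex mat" where
  "Fmat n d m \<Gamma> A B lam nu =
    (let X = shiftB n B nu;
         G = (\<lambda>i. kron (shiftA n A lam i * X) (\<Gamma> i * projP m));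
         H = (\<lambda>i. kron (shiftA n A lam i * adj X) (\<Gamma> i * projQ m))
     in msum (2*m*n) (2*m*n) (\<lambda>i. G i + adj (G i)) d
        - msum (2*m*n) (2*m*n) (\<lambda>i. H i + adj (H i)) d)"

definition quad_mat ::
  "nat \<Rightarrow> nat \<Rightarrow> (nat \<Rightarrow> complex mat) \<Rightarrow> complex mat \<Rightarrow> (nat \<Rightarrow> real) \<Rightarrow> complex \<Rightarrow> complex mat" where
  "quad_mat n d A B lam nu =
    (let X = shiftB n B nu;
         S = msum n n (\<lambda>i. shiftA n A lam i * shiftA n A lam i) d;
         RQ = S + adj X * X;
         LQ = S + X * adj X
     in kron RQ (mat 2 2 (\<lambda>(i,j). if i = 0 \<and> j = 0 then 1 else 0))
      + kron LQ (mat 2 2 (\<lambda>(i,j). if i = 1 \<and> j = 1 then 1 else 0)))"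

definition quad_gap ::
  "nat \<Rightarrow> nat \<Rightarrow> (nat \<Rightarrow> complex mat) \<Rightarrow> complex mat \<Rightarrow> (nat \<Rightarrow> real) \<Rightarrow> complex \<Rightarrow> real" where
  "quad_gap n d A B lam nu = sqrt (lambda_min (quad_mat n d A B lam nu))"

end

theory Submission
  imports Defs "HOL-Analysis.Function_Topology" "HOL-Analysis.Elementary_Metric_Spaces" "HOL-Analysis.L2_Norm"
begin

text \<open>Write L for the localizer. Expanding adj L * L, the Clifford relations turn the
  diagonal terms into the block-diagonal matrix RQ \<otimes> P + LQ \<otimes> Q, the off-diagonal pairs
  into commutators [A_i, A_j] \<otimes> \<Gamma>_i \<Gamma>_j with unitary \<Gamma>_i \<Gamma>_j, and the
  remaining cross terms into F. Hence the quadratic forms of adj L * L and of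
  RQ \<otimes> P + LQ \<otimes> Q differ by at most c = \<Sigma>_{i<j} \<parallel>[A_i, A_j]\<parallel> + \<parallel>F\<parallel> on unit
  vectors, so by the Rayleigh-quotient characterisation their smallest eigenvalues differ by at
  most c. The smallest eigenvalue of a direct sum is the minimum over the summands, so
  RQ \<otimes> P + LQ \<otimes> Q has the same smallest eigenvalue as the quadratic matrix. Taking square
  roots costs nothing since \<bar>\<surd>a - \<surd>b\<bar> \<le> \<surd>\<bar>a - b\<bar>.\<close>

section \<open>Adjoints and finite sums of matrices\<close>

lemma adj_dims [simp]: "dim_row (adj A) = dim_col A" "dim_col (adj A) = dim_row A"
  unfolding adj_def by auto

lemma adj_carrier [simp, intro]: "A \<in> carrier_mat r c \<Longrightarrow> adj A \<in> carrier_mat c r"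
  unfolding adj_def by auto

lemma index_adj [simp]: "i < dim_col A \<Longrightarrow> j < dim_row A \<Longrightarrow> adj A $$ (i,j) = cnj (A $$ (j,i))"
  unfolding adj_def by auto

lemma adj_adj [simp]: "adj (adj A) = A"
  by (rule eq_matI) auto

lemma adj_mult: "A \<in> carrier_mat r c \<Longrightarrow> B \<in> carrier_mat c e \<Longrightarrow> adj (A * B) = adj B * adj A"
  by (intro eq_matI) (auto simp: scalar_prod_def row_def col_def mult.commute)

lemma adj_add: "A \<in> carrier_mat r c \<Longrightarrow> B \<in> carrier_mat r c \<Longrightarrow> adj (A + B) = adj A + adj B"
  by (intro eq_matI) auto

lemma adj_minus: "A \<in> carrier_mat r c \<Longrightarrow> B \<in> carrier_mat r c \<Longrightarrow> adj (A - B) = adj A - adj B"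
  by (intro eq_matI) auto

lemma adj_smult: "adj (a \<cdot>\<^sub>m A) = cnj a \<cdot>\<^sub>m adj A"
  by (intro eq_matI) auto

lemma adj_one [simp]: "adj (1\<^sub>m n) = 1\<^sub>m n"
  by (intro eq_matI) auto

lemma adj_zero [simp]: "adj (0\<^sub>m r c) = 0\<^sub>m c r"
  by (intro eq_matI) auto

lemma hermitian_adj_mult_self: "Y \<in> carrier_mat r c \<Longrightarrow> hermitian (adj Y * Y)"
  unfolding hermitian_def by (auto simp: adj_mult[of _ c r _ c])

lemma msum_carrier [simp, intro]:
  "(\<And>l. l < k \<Longrightarrow> f l \<in> carrier_mat r c) \<Longrightarrow> msum r c f k \<in> carrier_mat r c"
  by (induction k) auto

lemma msum_cong: "(\<And>l. l < k \<Longrightarrow> f l = g l) \<Longrightarrow> msum r c f k = msum r c g k"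
  by (induction k) auto

lemma msum_mult_right:
  assumes "\<And>l. l < k \<Longrightarrow> f l \<in> carrier_mat r c" and "M \<in> carrier_mat c e"
  shows "msum r c f k * M = msum r e (\<lambda>l. f l * M) k"
  using assms by (induction k) (auto simp: add_mult_distrib_mat[of _ r c])

lemma msum_mult_left:
  assumes "\<And>l. l < k \<Longrightarrow> f l \<in> carrier_mat c e" and "M \<in> carrier_mat r c"
  shows "M * msum c e f k = msum r e (\<lambda>l. M * f l) k"
  using assms by (induction k) (auto simp: mult_add_distrib_mat[of _ r c _ e])

lemma adj_msum:
  "(\<And>l. l < k \<Longrightarrow> f l \<in> carrier_mat r c) \<Longrightarrow> adj (msum r c f k) = msum c r (\<lambda>l. adj (f l)) k"
  by (induction k) (auto simp: adj_add[of _ r c])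

section \<open>Inner products, norms and quadratic forms\<close>

definition vinner :: "complex vec \<Rightarrow> complex vec \<Rightarrow> complex" where
  "vinner x y = (\<Sum>i<dim_vec x. cnj (x$i) * y$i)"

definition qform :: "complex mat \<Rightarrow> complex vec \<Rightarrow> complex" where
  "qform M v = (\<Sum>i<dim_vec v. \<Sum>j<dim_vec v. cnj (v$i) * M$$(i,j) * v$j)"

lemma vnorm_power2: "(vnorm v)\<^sup>2 = (\<Sum>i<dim_vec v. (cmod (v$i))\<^sup>2)"
  unfolding vnorm_def by (simp add: sum_nonneg)

lemma vnorm_nonneg: "0 \<le> vnorm v"
  unfolding vnorm_def by (simp add: sum_nonneg)

lemma vnorm_zero_vec [simp]: "vnorm (0\<^sub>v N) = 0"
  unfolding vnorm_def by simp

lemma cmod_index_le_vnorm: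
  assumes "j < dim_vec v" shows "cmod (v$j) \<le> vnorm v"
proof -
  have "(cmod (v$j))\<^sup>2 \<le> (\<Sum>i<dim_vec v. (cmod (v$i))\<^sup>2)"
    using assms by (intro member_le_sum) auto
  then show ?thesis
    unfolding vnorm_power2[symmetric] by (rule power2_le_imp_le[OF _ vnorm_nonneg])
qed

lemma vnorm_eq_0_iff: "v \<in> carrier_vec N \<Longrightarrow> vnorm v = 0 \<longleftrightarrow> v = 0\<^sub>v N"
  using cmod_index_le_vnorm[of _ v] by (auto intro!: eq_vecI)

lemma vnorm_smult: "vnorm (a \<cdot>\<^sub>v v) = cmod a * vnorm v"
proof -
  have "(vnorm (a \<cdot>\<^sub>v v))\<^sup>2 = (cmod a * vnorm v)\<^sup>2"
    unfolding vnorm_power2 power_mult_distrib by (simp add: sum_distrib_left norm_mult power_mult_distrib)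
  then show ?thesis
    by (rule power2_eq_imp_eq) (simp_all add: vnorm_nonneg)
qed

lemma vnorm_normalize: "vnorm v \<noteq> 0 \<Longrightarrow> vnorm (complex_of_real (1 / vnorm v) \<cdot>\<^sub>v v) = 1"
  using vnorm_nonneg[of v] by (simp add: vnorm_smult norm_divide)

lemma vnorm_eq_1_iff: "vnorm v = 1 \<longleftrightarrow> (vnorm v)\<^sup>2 = 1"
  using vnorm_nonneg[of v] by (simp add: power2_eq_1_iff)

lemma vinner_self: "vinner v v = of_real ((vnorm v)\<^sup>2)"
  unfolding vnorm_power2 vinner_def of_real_sum
  by (rule sum.cong, simp, metis complex_norm_square mult.commute)

lemma vinner_add_right:
  "x \<in> carrier_vec N \<Longrightarrow> y \<in> carrier_vec N \<Longrightarrow> z \<in> carrier_vec N \<Longrightarrow> vinner x (y + z) = vinner x y + vinner x z"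
  unfolding vinner_def by (auto simp: algebra_simps sum.distrib)

lemma vinner_add_left:
  "x \<in> carrier_vec N \<Longrightarrow> y \<in> carrier_vec N \<Longrightarrow> z \<in> carrier_vec N \<Longrightarrow> vinner (x + y) z = vinner x z + vinner y z"
  unfolding vinner_def by (auto simp: algebra_simps sum.distrib)

lemma vinner_smult_right: "x \<in> carrier_vec N \<Longrightarrow> y \<in> carrier_vec N \<Longrightarrow> vinner x (a \<cdot>\<^sub>v y) = a * vinner x y"
  unfolding vinner_def by (auto simp: algebra_simps sum_distrib_left)

lemma vinner_smult_left: "x \<in> carrier_vec N \<Longrightarrow> y \<in> carrier_vec N \<Longrightarrow> vinner (a \<cdot>\<^sub>v x) y = cnj a * vinner x y"
  unfolding vinner_def by (auto simp: algebra_simps sum_distrib_left)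

lemma vinner_adj_right:
  assumes Y: "Y \<in> carrier_mat r c" and x: "x \<in> carrier_vec c" and z: "z \<in> carrier_vec r"
  shows "vinner x (adj Y *\<^sub>v z) = vinner (Y *\<^sub>v x) z"
proof -
  have "vinner x (adj Y *\<^sub>v z) = (\<Sum>i<c. \<Sum>j<r. cnj (x$i) * (cnj (Y$$(j,i)) * z$j))"
    unfolding vinner_def using assms
    by (auto simp: scalar_prod_def row_def atLeast0LessThan sum_distrib_left intro!: sum.cong)
  also have "\<dots> = (\<Sum>j<r. \<Sum>i<c. cnj (x$i) * (cnj (Y$$(j,i)) * z$j))"
    by (rule sum.swap)
  also have "\<dots> = vinner (Y *\<^sub>v x) z"
    unfolding vinner_def using assms
    by (auto simp: scalar_prod_def row_def atLeast0LessThan sum_distrib_left sum_distrib_right mult_ac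
        intro!: sum.cong)
  finally show ?thesis .
qed

lemma vinner_cauchy_schwarz:
  assumes "dim_vec y = dim_vec x" shows "cmod (vinner x y) \<le> vnorm x * vnorm y"
proof -
  have "cmod (vinner x y) \<le> (\<Sum>i<dim_vec x. cmod (x$i) * cmod (y$i))"
    unfolding vinner_def by (rule order_trans[OF norm_sum]) (simp add: norm_mult)
  also have "\<dots> \<le> L2_set (\<lambda>i. cmod (x$i)) {..<dim_vec x} * L2_set (\<lambda>i. cmod (y$i)) {..<dim_vec x}"
    using L2_set_mult_ineq[of "\<lambda>i. cmod (x$i)" "\<lambda>i. cmod (y$i)"] by simp
  also have "\<dots> = vnorm x * vnorm y"
    unfolding L2_set_def vnorm_def using assms by simp
  finally show ?thesis .
qed

lemma qform_vinner: "M \<in> carrier_mat N N \<Longrightarrow> v \<in> carrier_vec N \<Longrightarrow> qform M v = vinner v (M *\<^sub>v v)"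
  unfolding qform_def vinner_def
  by (auto simp: scalar_prod_def row_def atLeast0LessThan sum_distrib_left mult.assoc intro!: sum.cong)

lemma qform_add:
  "A \<in> carrier_mat N N \<Longrightarrow> B \<in> carrier_mat N N \<Longrightarrow> v \<in> carrier_vec N \<Longrightarrow> qform (A + B) v = qform A v + qform B v"
  unfolding qform_def by (auto simp: algebra_simps sum.distrib intro!: sum.cong)

lemma qform_minus:
  "A \<in> carrier_mat N N \<Longrightarrow> B \<in> carrier_mat N N \<Longrightarrow> v \<in> carrier_vec N \<Longrightarrow> qform (A - B) v = qform A v - qform B v"
  unfolding qform_def by (auto simp: algebra_simps sum_subtractf intro!: sum.cong)

lemma qform_uminus: "M \<in> carrier_mat N N \<Longrightarrow> v \<in> carrier_vec N \<Longrightarrow> qform (- M) v = - qform M v"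
  unfolding qform_def by (auto simp: sum_negf[symmetric] intro!: sum.cong)

lemma qform_zero_mat: "v \<in> carrier_vec N \<Longrightarrow> qform (0\<^sub>m N N) v = 0"
  unfolding qform_def by auto

lemma qform_zero_vec [simp]: "qform M (0\<^sub>v N) = 0"
  unfolding qform_def by simp

lemma qform_one: "v \<in> carrier_vec N \<Longrightarrow> qform (1\<^sub>m N) v = of_real ((vnorm v)\<^sup>2)"
  by (simp add: qform_vinner[of _ N] vinner_self)

lemma qform_smult_mat: "M \<in> carrier_mat N N \<Longrightarrow> v \<in> carrier_vec N \<Longrightarrow> qform (a \<cdot>\<^sub>m M) v = a * qform M v"
  unfolding qform_def by (auto simp: sum_distrib_left mult_ac intro!: sum.cong)

lemma qform_smult_vec:
  assumes "M \<in> carrier_mat N N" and "v \<in> carrier_vec N"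
  shows "qform M (a \<cdot>\<^sub>v v) = of_real ((cmod a)\<^sup>2) * qform M v"
proof -
  have "qform M (a \<cdot>\<^sub>v v) = (a * cnj a) * vinner v (M *\<^sub>v v)"
    using assms by (simp add: qform_vinner[of _ N] mult_mat_vec vinner_smult_right[of _ N] vinner_smult_left[of _ N])
  also have "a * cnj a = of_real ((cmod a)\<^sup>2)"
    by (metis complex_norm_square of_real_power)
  finally show ?thesis
    using assms by (simp add: qform_vinner[of _ N])
qed

lemma qform_msum:
  "(\<And>l. l < k \<Longrightarrow> f l \<in> carrier_mat N N) \<Longrightarrow> v \<in> carrier_vec N \<Longrightarrow> qform (msum N N f k) v = (\<Sum>l<k. qform (f l) v)"
proof (induction k)
  case (Suc k)
  then show ?case
    by (simp add: qform_add[of _ N])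
qed (simp add: qform_def)

lemma qform_adj_mult_self:
  assumes Y: "Y \<in> carrier_mat r N" and v: "v \<in> carrier_vec N"
  shows "qform (adj Y * Y) v = of_real ((vnorm (Y *\<^sub>v v))\<^sup>2)"
proof -
  have "qform (adj Y * Y) v = vinner v ((adj Y * Y) *\<^sub>v v)"
    using Y v by (intro qform_vinner) auto
  also have "(adj Y * Y) *\<^sub>v v = adj Y *\<^sub>v (Y *\<^sub>v v)"
    using Y v by (intro assoc_mult_mat_vec) auto
  also have "vinner v (adj Y *\<^sub>v (Y *\<^sub>v v)) = vinner (Y *\<^sub>v v) (Y *\<^sub>v v)"
    using Y v by (intro vinner_adj_right) auto
  finally show ?thesis
    by (simp add: vinner_self)
qed

lemma qform_hermitian_real:
  assumes "hermitian M" and "M \<in> carrier_mat N N" and "v \<in> carrier_vec N"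
  shows "qform M v = of_real (Re (qform M v))"
proof -
  have herm: "cnj (M$$(i,j)) = M$$(j,i)" if "i < N" "j < N" for i j
    using assms that unfolding hermitian_def by (metis carrier_matD index_adj)
  have "cnj (qform M v) = (\<Sum>i<N. \<Sum>j<N. v$i * cnj (M$$(i,j)) * cnj (v$j))"
    using assms unfolding qform_def by simp
  also have "\<dots> = (\<Sum>j<N. \<Sum>i<N. v$i * cnj (M$$(i,j)) * cnj (v$j))"
    by (rule sum.swap)
  also have "\<dots> = qform M v"
    using assms(3) unfolding qform_def by (auto simp: herm mult_ac intro!: sum.cong)
  finally show ?thesis
    by (metis Reals_cnj_iff complex_is_Real_iff of_real_Re)
qed

lemma qform_mult_sum3:
  assumes U: "U1 \<in> carrier_mat N N" "U2 \<in> carrier_mat N N" "U3 \<in> carrier_mat N N"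
    and V: "V1 \<in> carrier_mat N N" "V2 \<in> carrier_mat N N" "V3 \<in> carrier_mat N N"
    and v: "v \<in> carrier_vec N"
  shows "qform ((U1 + U2 - U3) * (V1 + V2 - V3)) v =
    qform (U1*V1) v + qform (U2*V1) v - qform (U3*V1) v + qform (U1*V2) v + qform (U2*V2) v - qform (U3*V2) v
    - qform (U1*V3) v - qform (U2*V3) v + qform (U3*V3) v"
proof -
  have U': "U1 + U2 \<in> carrier_mat N N" "U1 + U2 - U3 \<in> carrier_mat N N"
    using U by auto
  have distrib: "qform ((U1 + U2 - U3) * W) v = qform (U1*W) v + qform (U2*W) v - qform (U3*W) v"
    if W: "W \<in> carrier_mat N N" for W
    using U W v
    by (simp add: minus_mult_distrib_mat[OF U'(1) U(3) W] add_mult_distrib_mat[OF U(1,2) W]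
        qform_minus[of _ N] qform_add[of _ N])
  have "(U1 + U2 - U3) * (V1 + V2 - V3) = (U1 + U2 - U3) * V1 + (U1 + U2 - U3) * V2 - (U1 + U2 - U3) * V3"
    using V by (simp add: mult_minus_distrib_mat[OF U'(2) _ V(3)] mult_add_distrib_mat[OF U'(2) V(1,2)])
  then show ?thesis
    using U U' V v by (simp add: qform_minus[of _ N] qform_add[of _ N] distrib)
qed

section \<open>The operator norm\<close>

lemma vnorm_mult_le_opnorm_unit:
  assumes A: "A \<in> carrier_mat r c" and v: "v \<in> carrier_vec c" "vnorm v = 1"
  shows "vnorm (A *\<^sub>v v) \<le> opnorm A"
  unfolding opnorm_def
proof (rule cSup_upper)
  show "vnorm (A *\<^sub>v v) \<in> {vnorm (A *\<^sub>v v) |v. v \<in> carrier_vec (dim_col A) \<and> vnorm v = 1}"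
    using A v by auto
  have "vnorm (A *\<^sub>v w) \<le> (\<Sum>i<r. \<Sum>j<c. cmod (A$$(i,j)))"
    if w: "w \<in> carrier_vec c" "vnorm w = 1" for w
  proof -
    have "vnorm (A *\<^sub>v w) = L2_set (\<lambda>i. cmod ((A *\<^sub>v w)$i)) {..<r}"
      unfolding vnorm_def L2_set_def using A by simp
    also have "\<dots> \<le> (\<Sum>i<r. cmod ((A *\<^sub>v w)$i))"
      by (rule L2_set_le_sum) auto
    also have "\<dots> \<le> (\<Sum>i<r. \<Sum>j<c. cmod (A$$(i,j)) * cmod (w$j))"
      using A w by (auto simp: scalar_prod_def row_def atLeast0LessThan norm_mult
          intro!: sum_mono order_trans[OF norm_sum])
    also have "\<dots> \<le> (\<Sum>i<r. \<Sum>j<c. cmod (A$$(i,j)))"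
      using w cmod_index_le_vnorm[of _ w] by (auto intro!: sum_mono mult_left_le)
    finally show ?thesis .
  qed
  then show "bdd_above {vnorm (A *\<^sub>v v) |v. v \<in> carrier_vec (dim_col A) \<and> vnorm v = 1}"
    using A by (auto intro!: bdd_aboveI)
qed

lemma vnorm_mult_le_opnorm:
  assumes A: "A \<in> carrier_mat r c" and v: "v \<in> carrier_vec c"
  shows "vnorm (A *\<^sub>v v) \<le> opnorm A * vnorm v"
proof (cases "vnorm v = 0")
  case True
  then have "A *\<^sub>v v = 0\<^sub>v r"
    using A v by (auto simp: vnorm_eq_0_iff)
  then show ?thesis
    using True by simp
next
  case False
  define w where "w = complex_of_real (1 / vnorm v) \<cdot>\<^sub>v v"
  have "vnorm (A *\<^sub>v w) = vnorm (A *\<^sub>v v) / vnorm v"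
    unfolding w_def using A v vnorm_nonneg[of v] by (simp add: mult_mat_vec vnorm_smult norm_divide)
  moreover have "vnorm (A *\<^sub>v w) \<le> opnorm A"
    using A v vnorm_normalize[OF False] unfolding w_def by (intro vnorm_mult_le_opnorm_unit) auto
  ultimately show ?thesis
    using False vnorm_nonneg[of v] by (simp add: field_simps) (metis mult.commute mult_left_mono)
qed

lemma opnorm_nonneg:
  assumes "C \<in> carrier_mat r c" and "0 < c" shows "0 \<le> opnorm C"
proof -
  define e where "e = (unit_vec c 0 :: complex vec)"
  have "(\<Sum>i<c. (cmod (e$i))\<^sup>2) = (\<Sum>i<c. if i = 0 then 1 else 0)"
    unfolding e_def by (intro sum.cong) auto
  then have "vnorm e = 1"
    unfolding vnorm_eq_1_iff vnorm_power2 e_def using assms by simp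
  then have "vnorm (C *\<^sub>v e) \<le> opnorm C"
    using assms unfolding e_def by (intro vnorm_mult_le_opnorm_unit) auto
  then show ?thesis
    using vnorm_nonneg[of "C *\<^sub>v e"] by simp
qed

lemma cmod_qform_le_opnorm:
  assumes F: "F \<in> carrier_mat N N" and v: "v \<in> carrier_vec N"
  shows "cmod (qform F v) \<le> opnorm F * (vnorm v)\<^sup>2"
proof -
  have "cmod (qform F v) \<le> vnorm v * vnorm (F *\<^sub>v v)"
    unfolding qform_vinner[OF F v] by (rule vinner_cauchy_schwarz) (use F v in auto)
  also have "\<dots> \<le> vnorm v * (opnorm F * vnorm v)"
    by (rule mult_left_mono[OF vnorm_mult_le_opnorm[OF F v] vnorm_nonneg])
  finally show ?thesis
    by (simp add: power2_eq_square mult_ac)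
qed

section \<open>Smallest eigenvalues via the Rayleigh quotient\<close>

text \<open>The generic compact_cball does not apply: the heine_borel instance of complex comes with
  HOL-Analysis.Topology_Euclidean_Space, whose vec type clashes with that of the matrix library.\<close>

lemma compact_cball_complex: "compact (cball (0::complex) r)"
proof -
  have "cball (0::complex) r = (\<lambda>p. Complex (fst p) (snd p)) ` cball (0::real \<times> real) r"
    by (auto simp: norm_prod_def cmod_def dist_norm image_iff intro!: bexI[of _ "(Re x, Im x)" for x])
  moreover have "compact ((\<lambda>p. Complex (fst p) (snd p)) ` cball (0::real \<times> real) r)"
    by (intro compact_continuous_image continuous_intros compact_cball)
  ultimately show ?thesis
    by simp
qed

lemma compact_PiE_unit_cball: "compact (PiE {..<N} (\<lambda>_. cball (0::complex) 1))"
proof -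
  have "PiE {..<N} (\<lambda>_. cball (0::complex) 1) = PiE UNIV (\<lambda>i. if i < N then cball 0 1 else {undefined})"
    by (auto simp: PiE_def extensional_def Pi_def split: if_splits)
  moreover have "compactin (product_topology (\<lambda>_. euclidean) UNIV)
      (PiE UNIV (\<lambda>i. if i < N then cball (0::complex) 1 else {undefined}))"
    by (subst compactin_PiE) (auto simp: compact_cball_complex)
  ultimately show ?thesis
    by (simp add: euclidean_product_topology)
qed

lemma qform_attains_min_on_unit_sphere:
  assumes M: "M \<in> carrier_mat N N" and N: "0 < N"
  obtains v0 where "v0 \<in> carrier_vec N" "vnorm v0 = 1"
    "\<And>v. v \<in> carrier_vec N \<Longrightarrow> vnorm v = 1 \<Longrightarrow> Re (qform M v0) \<le> Re (qform M v)"
proof -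
  define g where "g f = Re (\<Sum>i<N. \<Sum>j<N. cnj (f i) * M$$(i,j) * f j)" for f :: "nat \<Rightarrow> complex"
  define S where "S = PiE {..<N} (\<lambda>_. cball (0::complex) 1) \<inter> {f. (\<Sum>i<N. (cmod (f i))\<^sup>2) = 1}"
  have coord: "continuous_on T (\<lambda>f::nat \<Rightarrow> complex. f i)" for T i
    by (rule continuous_on_subset[OF continuous_on_product_coordinates]) auto
  have "closed {f::nat\<Rightarrow>complex. (\<Sum>i<N. (cmod (f i))\<^sup>2) = 1}"
    by (intro closed_Collect_eq continuous_intros coord)
  then have "compact S"
    unfolding S_def by (rule compact_Int_closed[OF compact_PiE_unit_cball])
  moreover have "S \<noteq> {}"
  proof -
    have "(\<Sum>i<N. (cmod (if i < N then if i = 0 then 1 else 0 else undefined))\<^sup>2) = (\<Sum>i<N. if i = 0 then 1 else (0::real))"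
      by (intro sum.cong) auto
    then have "(\<lambda>i. if i < N then if i = 0 then 1 else 0 else undefined) \<in> S"
      using N by (auto simp: S_def PiE_def extensional_def)
    then show ?thesis
      by blast
  qed
  moreover have "continuous_on S g"
    unfolding g_def by (intro continuous_intros coord)
  ultimately obtain f0 where f0: "f0 \<in> S" and f0_min: "\<And>f. f \<in> S \<Longrightarrow> g f0 \<le> g f"
    using continuous_attains_inf by metis
  show ?thesis
  proof
    show "vec N f0 \<in> carrier_vec N"
      by simp
    show "vnorm (vec N f0) = 1"
      using f0 unfolding vnorm_eq_1_iff vnorm_power2 S_def by simp
    fix v assume v: "v \<in> carrier_vec N" "vnorm v = 1"
    have "(\<lambda>i. if i < N then v$i else undefined) \<in> S"
      using v cmod_index_le_vnorm[of _ v] vnorm_power2[of v]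
      unfolding S_def by (auto simp: PiE_def extensional_def)
    from f0_min[OF this] show "Re (qform M (vec N f0)) \<le> Re (qform M v)"
      using v unfolding g_def qform_def by simp
  qed
qed

lemma qform_lower_bound_homogeneous:
  assumes M: "M \<in> carrier_mat N N"
    and bound: "\<And>u. u \<in> carrier_vec N \<Longrightarrow> vnorm u = 1 \<Longrightarrow> \<mu> \<le> Re (qform M u)"
    and w: "w \<in> carrier_vec N"
  shows "\<mu> * (vnorm w)\<^sup>2 \<le> Re (qform M w)"
proof (cases "vnorm w = 0")
  case True
  then show ?thesis
    using w by (simp add: vnorm_eq_0_iff)
next
  case False
  define u where "u = complex_of_real (1 / vnorm w) \<cdot>\<^sub>v w"
  have "Re (qform M u) = Re (qform M w) / (vnorm w)\<^sup>2"
    unfolding u_def qform_smult_vec[OF M w] using vnorm_nonneg[of w]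
    by (simp add: norm_divide power_divide)
  moreover have "\<mu> \<le> Re (qform M u)"
    using w vnorm_normalize[OF False] unfolding u_def by (intro bound) auto
  ultimately show ?thesis
    using False vnorm_nonneg[of w] by (simp add: field_simps) (metis mult_right_mono zero_le_power2)
qed

lemma linear_coeff_zero_if_quadratic_nonneg:
  fixes a c :: real
  assumes nonneg: "\<And>t. 0 \<le> 2 * t * a + t\<^sup>2 * c" and "0 \<le> a"
  shows "a = 0"
proof (rule ccontr)
  assume "a \<noteq> 0"
  with \<open>0 \<le> a\<close> have a: "0 < a" by simp
  define e where "e = \<bar>c\<bar> + 1"
  have e: "0 < e" unfolding e_def by simp
  define t where "t = - a / e"
  have "t\<^sup>2 * c \<le> t\<^sup>2 * \<bar>c\<bar>"
    by (simp add: mult_left_mono)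
  also have "\<dots> = a\<^sup>2 * \<bar>c\<bar> / e\<^sup>2"
    unfolding t_def by (simp add: power_divide)
  also have "\<dots> \<le> a\<^sup>2 * e / e\<^sup>2"
    unfolding e_def by (intro divide_right_mono mult_left_mono) auto
  also have "\<dots> = a\<^sup>2 / e"
    using e by (simp add: power2_eq_square)
  finally have "0 \<le> 2 * t * a + a\<^sup>2 / e"
    using nonneg[of t] by linarith
  also have "2 * t * a + a\<^sup>2 / e = - a\<^sup>2 / e"
    unfolding t_def using e by (simp add: field_simps power2_eq_square)
  finally have "a\<^sup>2 / e \<le> 0"
    by simp
  then show False
    using a e by (simp add: divide_le_0_iff)
qed

text \<open>A positive semidefinite form vanishes at v only if v is in the kernel: otherwise
  it would be negative at v + t M v for small t < 0.\<close>

lemma psd_qform_zero_imp_kernel: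
  assumes M: "M \<in> carrier_mat N N" and H: "hermitian M"
    and psd: "\<And>w. w \<in> carrier_vec N \<Longrightarrow> 0 \<le> Re (qform M w)"
    and v: "v \<in> carrier_vec N" and zero: "qform M v = 0"
  shows "M *\<^sub>v v = 0\<^sub>v N"
proof -
  define z where "z = M *\<^sub>v v"
  have z: "z \<in> carrier_vec N"
    unfolding z_def using M v by simp
  have "0 \<le> 2 * t * (vnorm z)\<^sup>2 + t\<^sup>2 * Re (qform M z)" for t
  proof -
    define w where "w = v + complex_of_real t \<cdot>\<^sub>v z"
    have w: "w \<in> carrier_vec N"
      unfolding w_def using v z by simp
    have Mw: "M *\<^sub>v w = z + complex_of_real t \<cdot>\<^sub>v (M *\<^sub>v z)"
      unfolding w_def z_def using M v z by (simp add: mult_add_distrib_mat_vec[of _ N N] mult_mat_vec[of _ N N])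
    have "vinner v z = 0"
      using zero qform_vinner[OF M v] unfolding z_def by simp
    moreover have "vinner v (M *\<^sub>v z) = vinner z z"
      using vinner_adj_right[OF M v z] H unfolding z_def hermitian_def by simp
    ultimately have "qform M w = of_real t * vinner z z + of_real t * vinner z z + of_real t * of_real t * qform M z"
      unfolding qform_vinner[OF M w] qform_vinner[OF M z] Mw unfolding w_def using v z M
      by (simp add: vinner_add_left[of _ N] vinner_add_right[of _ N] vinner_smult_left[of _ N]
          vinner_smult_right[of _ N] algebra_simps)
    then show ?thesis
      using psd[OF w] by (simp add: vinner_self power2_eq_square)
  qed
  then have "(vnorm z)\<^sup>2 = 0"
    by (intro linear_coeff_zero_if_quadratic_nonneg) auto
  then show ?thesis
    using z unfolding z_def[symmetric] by (simp add: vnorm_eq_0_iff)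
qed

lemma finite_eigenvalues:
  fixes M :: "'a :: field mat"
  assumes M: "M \<in> carrier_mat N N"
  shows "finite {k. eigenvalue M k}"
proof -
  have "char_poly M \<noteq> 0"
    using degree_monic_char_poly[OF M] by auto
  then show ?thesis
    using eigenvalue_root_char_poly[OF M] by (auto intro: finite_subset[OF _ poly_roots_finite])
qed

lemma min_qform_eigenvector:
  assumes M: "M \<in> carrier_mat N N" and H: "hermitian M"
    and v0: "v0 \<in> carrier_vec N" "vnorm v0 = 1" "Re (qform M v0) = \<mu>"
    and lower: "\<And>v. v \<in> carrier_vec N \<Longrightarrow> vnorm v = 1 \<Longrightarrow> \<mu> \<le> Re (qform M v)"
  shows "M *\<^sub>v v0 = complex_of_real \<mu> \<cdot>\<^sub>v v0"
proof -
  define M' where "M' = M - complex_of_real \<mu> \<cdot>\<^sub>m 1\<^sub>m N"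
  have M': "M' \<in> carrier_mat N N"
    unfolding M'_def using M by auto
  have qform_M': "qform M' w = qform M w - of_real (\<mu> * (vnorm w)\<^sup>2)" if "w \<in> carrier_vec N" for w
    unfolding M'_def using that M by (simp add: qform_minus[of _ N] qform_smult_mat[of _ N] qform_one)
  have "hermitian M'"
    using M H unfolding M'_def hermitian_def by (simp add: adj_minus[of _ N N] adj_smult)
  moreover have "0 \<le> Re (qform M' w)" if "w \<in> carrier_vec N" for w
    using qform_lower_bound_homogeneous[OF M lower that] qform_M'[OF that] by simp
  moreover have "qform M' v0 = 0"
    using qform_hermitian_real[OF \<open>hermitian M'\<close> M' v0(1)] qform_M'[OF v0(1)] v0 by simp
  ultimately have "M' *\<^sub>v v0 = 0\<^sub>v N"
    using psd_qform_zero_imp_kernel[OF M'] v0(1) by blast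
  moreover have "(complex_of_real \<mu> \<cdot>\<^sub>m 1\<^sub>m N) *\<^sub>v v0 = complex_of_real \<mu> \<cdot>\<^sub>v v0"
    using v0(1) by auto
  ultimately have ker: "M *\<^sub>v v0 - complex_of_real \<mu> \<cdot>\<^sub>v v0 = 0\<^sub>v N"
    unfolding M'_def using M v0(1) by (simp add: minus_mult_distrib_mat_vec[of _ N N])
  show ?thesis
  proof (rule eq_vecI)
    fix i assume "i < dim_vec (complex_of_real \<mu> \<cdot>\<^sub>v v0)"
    then show "(M *\<^sub>v v0) $ i = (complex_of_real \<mu> \<cdot>\<^sub>v v0) $ i"
      using arg_cong[OF ker, of "\<lambda>x. x $ i"] M v0(1) by simp
  qed (use M v0(1) in simp)
qed

lemma eigenvalue_ge_qform_lower_bound: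
  assumes M: "M \<in> carrier_mat N N"
    and lower: "\<And>v. v \<in> carrier_vec N \<Longrightarrow> vnorm v = 1 \<Longrightarrow> \<mu> \<le> Re (qform M v)"
    and k: "eigenvalue M k"
  shows "\<mu> \<le> Re k"
proof -
  obtain u where u: "u \<in> carrier_vec N" "u \<noteq> 0\<^sub>v N" "M *\<^sub>v u = k \<cdot>\<^sub>v u"
    using k M unfolding eigenvalue_def eigenvector_def by auto
  have "Re (qform M u) = Re k * (vnorm u)\<^sup>2"
    using qform_vinner[OF M u(1)] vinner_smult_right[of u N u k] u by (simp add: vinner_self)
  moreover have "0 < (vnorm u)\<^sup>2"
    using u vnorm_eq_0_iff[OF u(1)] vnorm_nonneg[of u] by simp
  ultimately show ?thesis
    using qform_lower_bound_homogeneous[OF M lower u(1)] by simp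
qed

lemma lambda_min_eqI:
  assumes M: "M \<in> carrier_mat N N" and H: "hermitian M"
    and v0: "v0 \<in> carrier_vec N" "vnorm v0 = 1" "Re (qform M v0) = \<mu>"
    and lower: "\<And>v. v \<in> carrier_vec N \<Longrightarrow> vnorm v = 1 \<Longrightarrow> \<mu> \<le> Re (qform M v)"
  shows "lambda_min M = \<mu>"
proof -
  have "eigenvalue M (complex_of_real \<mu>)"
    using min_qform_eigenvector[OF assms] M v0 unfolding eigenvalue_def eigenvector_def by auto
  then show ?thesis
    unfolding lambda_min_def using finite_eigenvalues[OF M] eigenvalue_ge_qform_lower_bound[OF M lower]
    by (intro Min_eqI) (auto simp: setcompr_eq_image intro!: image_eqI[of _ Re "complex_of_real \<mu>"])
qed

lemma lambda_min_attained:
  assumes M: "M \<in> carrier_mat N N" and N: "0 < N" and H: "hermitian M"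
  obtains v where "v \<in> carrier_vec N" "vnorm v = 1" "Re (qform M v) = lambda_min M"
    "\<And>w. w \<in> carrier_vec N \<Longrightarrow> vnorm w = 1 \<Longrightarrow> lambda_min M \<le> Re (qform M w)"
proof -
  obtain v0 where v0: "v0 \<in> carrier_vec N" "vnorm v0 = 1"
    and min: "\<And>v. v \<in> carrier_vec N \<Longrightarrow> vnorm v = 1 \<Longrightarrow> Re (qform M v0) \<le> Re (qform M v)"
    using qform_attains_min_on_unit_sphere[OF M N] by blast
  have "lambda_min M = Re (qform M v0)"
    using lambda_min_eqI[OF M H v0 refl min] .
  then show ?thesis
    using that v0 min by simp
qed

lemma lambda_min_le_qform:
  assumes M: "M \<in> carrier_mat N N" and N: "0 < N" and H: "hermitian M" and w: "w \<in> carrier_vec N"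
  shows "lambda_min M * (vnorm w)\<^sup>2 \<le> Re (qform M w)"
  using lambda_min_attained[OF M N H] qform_lower_bound_homogeneous[OF M _ w] by metis

lemma lambda_min_nonneg:
  assumes M: "M \<in> carrier_mat N N" and N: "0 < N" and H: "hermitian M"
    and psd: "\<And>w. w \<in> carrier_vec N \<Longrightarrow> 0 \<le> Re (qform M w)"
  shows "0 \<le> lambda_min M"
  using lambda_min_attained[OF M N H] psd by metis

lemma abs_lambda_min_diff_le:
  assumes M: "M \<in> carrier_mat N N" "hermitian M" and M': "M' \<in> carrier_mat N N" "hermitian M'"
    and N: "0 < N"
    and close: "\<And>v. v \<in> carrier_vec N \<Longrightarrow> vnorm v = 1 \<Longrightarrow> cmod (qform M v - qform M' v) \<le> c"
  shows "\<bar>lambda_min M - lambda_min M'\<bar> \<le> c"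
proof -
  have Re_close: "\<bar>Re (qform M v) - Re (qform M' v)\<bar> \<le> c" if "v \<in> carrier_vec N" "vnorm v = 1" for v
    using abs_Re_le_cmod[of "qform M v - qform M' v"] close[OF that] by simp
  obtain v where v: "v \<in> carrier_vec N" "vnorm v = 1" "Re (qform M v) = lambda_min M"
    using lambda_min_attained[OF M(1) N M(2)] by blast
  obtain v' where v': "v' \<in> carrier_vec N" "vnorm v' = 1" "Re (qform M' v') = lambda_min M'"
    using lambda_min_attained[OF M'(1) N M'(2)] by blast
  have "lambda_min M \<le> Re (qform M v')" "lambda_min M' \<le> Re (qform M' v)"
    using lambda_min_le_qform[OF M(1) N M(2) v'(1)] lambda_min_le_qform[OF M'(1) N M'(2) v(1)] v v'
    by simp_all
  then show ?thesis
    using Re_close[OF v(1,2)] Re_close[OF v'(1,2)] v(3) v'(3) by linarith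
qed

section \<open>Kronecker products\<close>

lemma sum_lessThan_mult_blocks:
  fixes g :: "nat \<Rightarrow> 'a::comm_monoid_add"
  shows "(\<Sum>k<p*q. g k) = (\<Sum>a<p. \<Sum>b<q. g (a*q+b))"
proof -
  have "(\<Sum>k<p*q. g k) = (\<Sum>a<p. sum g {a*q..<a*q+q})"
    using sum.nat_group[of g q p] by simp
  also have "\<dots> = (\<Sum>a<p. \<Sum>b<q. g (a*q+b))"
  proof (rule sum.cong[OF refl])
    fix a
    have "sum g {0 + a*q..<q + a*q} = (\<Sum>b = 0..<q. g (b + a*q))"
      by (rule sum.shift_bounds_nat_ivl)
    then show "sum g {a*q..<a*q+q} = (\<Sum>b<q. g (a*q+b))"
      by (simp add: add.commute atLeast0LessThan)
  qed
  finally show ?thesis .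
qed

lemma block_index_less: "a < p \<Longrightarrow> b < q \<Longrightarrow> a*q+b < p*(q::nat)"
proof -
  assume "a < p" "b < q"
  then have "a*q+b < (a+1)*q" by simp
  also have "\<dots> \<le> p*q" using \<open>a < p\<close> by (intro mult_le_mono1) simp
  finally show ?thesis .
qed

lemma block_index_bounds:
  fixes i a b :: nat assumes "i < a*b" shows "i div b < a" "i mod b < b"
proof -
  have "0 < b"
    using assms by (auto intro: gr0I)
  then show "i mod b < b"
    by simp
  show "i div b < a"
    using assms by (simp add: less_mult_imp_div_less)
qed

lemma kron_dims [simp]:
  "dim_row (kron A B) = dim_row A * dim_row B" "dim_col (kron A B) = dim_col A * dim_col B"
  unfolding kron_def by auto

lemma kron_carrier [simp, intro]:
  "A \<in> carrier_mat ra ca \<Longrightarrow> B \<in> carrier_mat rb cb \<Longrightarrow> kron A B \<in> carrier_mat (ra*rb) (ca*cb)"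
  unfolding kron_def by auto

lemma index_kron:
  "i < dim_row A * dim_row B \<Longrightarrow> j < dim_col A * dim_col B \<Longrightarrow>
   kron A B $$ (i,j) = A $$ (i div dim_row B, j div dim_col B) * B $$ (i mod dim_row B, j mod dim_col B)"
  unfolding kron_def by auto

lemma index_kron_block:
  assumes "A \<in> carrier_mat ra ca" "B \<in> carrier_mat rb cb" "a < ra" "b < rb" "a' < ca" "b' < cb"
  shows "kron A B $$ (a*rb+b, a'*cb+b') = A $$ (a,a') * B $$ (b,b')"
  using assms block_index_less[of a ra b rb] block_index_less[of a' ca b' cb] by (simp add: index_kron)

lemma kron_mult:
  assumes A: "A \<in> carrier_mat ra ca" and B: "B \<in> carrier_mat rb cb"
    and C: "C \<in> carrier_mat ca cc" and D: "D \<in> carrier_mat cb cd"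
  shows "kron A B * kron C D = kron (A * C) (B * D)"
proof (rule eq_matI)
  fix i j assume "i < dim_row (kron (A*C) (B*D))" "j < dim_col (kron (A*C) (B*D))"
  then have i: "i < ra*rb" and j: "j < cc*cd"
    using A B C D by auto
  note i' = block_index_bounds[OF i] and j' = block_index_bounds[OF j]
  have "(kron A B * kron C D) $$ (i,j) = (\<Sum>k<ca*cb. kron A B $$ (i,k) * kron C D $$ (k,j))"
    using A B C D i j by (simp add: scalar_prod_def row_def col_def atLeast0LessThan)
  also have "\<dots> = (\<Sum>a<ca. \<Sum>b<cb. kron A B $$ (i,a*cb+b) * kron C D $$ (a*cb+b,j))"
    by (rule sum_lessThan_mult_blocks)
  also have "\<dots> = (\<Sum>a<ca. \<Sum>b<cb. (A $$ (i div rb, a) * C $$ (a, j div cd)) * (B $$ (i mod rb, b) * D $$ (b, j mod cd)))"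
    using A B C D i j block_index_less[of _ ca _ cb] by (intro sum.cong refl) (simp add: index_kron)
  also have "\<dots> = (\<Sum>a<ca. A $$ (i div rb, a) * C $$ (a, j div cd)) * (\<Sum>b<cb. B $$ (i mod rb, b) * D $$ (b, j mod cd))"
    by (simp add: sum_product)
  also have "\<dots> = kron (A * C) (B * D) $$ (i,j)"
    using A B C D i j i' j' by (simp add: index_kron scalar_prod_def row_def col_def atLeast0LessThan)
  finally show "(kron A B * kron C D) $$ (i,j) = kron (A * C) (B * D) $$ (i,j)" .
qed (use A B C D in auto)

lemma adj_kron: "adj (kron A B) = kron (adj A) (adj B)"
proof (rule eq_matI)
  fix i j assume "i < dim_row (kron (adj A) (adj B))" "j < dim_col (kron (adj A) (adj B))"
  then have "i < dim_col A * dim_col B" "j < dim_row A * dim_row B"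
    by auto
  then show "adj (kron A B) $$ (i,j) = kron (adj A) (adj B) $$ (i,j)"
    using block_index_bounds by (simp add: index_kron)
qed auto

lemma kron_add_left:
  assumes "A \<in> carrier_mat ra ca" "A' \<in> carrier_mat ra ca"
  shows "kron (A + A') B = kron A B + kron A' B"
  using assms block_index_bounds[of _ ra "dim_row B"] block_index_bounds[of _ ca "dim_col B"]
  by (intro eq_matI) (auto simp: index_kron algebra_simps)

lemma kron_minus_left:
  assumes "A \<in> carrier_mat ra ca" "A' \<in> carrier_mat ra ca"
  shows "kron (A - A') B = kron A B - kron A' B"
  using assms block_index_bounds[of _ ra "dim_row B"] block_index_bounds[of _ ca "dim_col B"]
  by (intro eq_matI) (auto simp: index_kron algebra_simps)

lemma kron_add_right:
  assumes "B \<in> carrier_mat rb cb" "B' \<in> carrier_mat rb cb"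
  shows "kron A (B + B') = kron A B + kron A B'"
  using assms block_index_bounds[of _ "dim_row A" rb] block_index_bounds[of _ "dim_col A" cb]
  by (intro eq_matI) (auto simp: index_kron algebra_simps)

lemma kron_uminus_right: "kron A (- B) = - kron A B"
  using block_index_bounds[of _ "dim_row A" "dim_row B"] block_index_bounds[of _ "dim_col A" "dim_col B"]
  by (intro eq_matI) (auto simp: index_kron)

lemma kron_zero_right: "kron A (0\<^sub>m rb cb) = 0\<^sub>m (dim_row A * rb) (dim_col A * cb)"
  using block_index_bounds[of _ "dim_row A" rb] block_index_bounds[of _ "dim_col A" cb]
  by (intro eq_matI) (auto simp: index_kron)

lemma kron_one_one: "kron (1\<^sub>m a) (1\<^sub>m b) = 1\<^sub>m (a*b)"
proof (rule eq_matI)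
  fix i j assume "i < dim_row (1\<^sub>m (a*b))" "j < dim_col (1\<^sub>m (a*b))"
  then have ij: "i < a*b" "j < a*b"
    by auto
  have "(i div b = j div b \<and> i mod b = j mod b) = (i = j)"
    by (metis div_mult_mod_eq)
  then show "kron (1\<^sub>m a) (1\<^sub>m b) $$ (i,j) = 1\<^sub>m (a*b) $$ (i,j)"
    using ij block_index_bounds[OF ij(1)] block_index_bounds[OF ij(2)] by (auto simp: index_kron)
qed auto

lemma kron_msum_left:
  assumes "\<And>l. l < k \<Longrightarrow> f l \<in> carrier_mat r c"
  shows "kron (msum r c f k) B = msum (r * dim_row B) (c * dim_col B) (\<lambda>l. kron (f l) B) k"
  using assms
proof (induction k)
  case 0
  show ?case
    using block_index_bounds[of _ r "dim_row B"] block_index_bounds[of _ c "dim_col B"]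
    by (intro eq_matI) (auto simp: index_kron)
next
  case (Suc k)
  then show ?case
    by (simp add: kron_add_left[of _ r c])
qed

text \<open>Index a*s+b of a vector in C^n \<otimes> C^s corresponds to the pair (a,b), as in kron.\<close>

definition block_vec :: "nat \<Rightarrow> nat \<Rightarrow> nat \<Rightarrow> complex vec \<Rightarrow> complex vec" where
  "block_vec n s b v = vec n (\<lambda>a. v $ (a*s+b))"

lemma block_vec_carrier [simp]: "block_vec n s b v \<in> carrier_vec n"
  unfolding block_vec_def by simp

lemma sum_vnorm_block_vec:
  assumes "v \<in> carrier_vec (n*s)"
  shows "(\<Sum>b<s. (vnorm (block_vec n s b v))\<^sup>2) = (vnorm v)\<^sup>2"
proof -
  have "(vnorm v)\<^sup>2 = (\<Sum>a<n. \<Sum>b<s. (cmod (v$(a*s+b)))\<^sup>2)"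
    unfolding vnorm_power2 using assms sum_lessThan_mult_blocks by simp
  also have "\<dots> = (\<Sum>b<s. \<Sum>a<n. (cmod (v$(a*s+b)))\<^sup>2)"
    by (rule sum.swap)
  finally show ?thesis
    unfolding vnorm_power2 block_vec_def by simp
qed

lemma block_vec_embed:
  assumes "u \<in> carrier_vec n" and "b0 < s"
  obtains w where "w \<in> carrier_vec (n*s)" "\<And>b. b < s \<Longrightarrow> block_vec n s b w = (if b = b0 then u else 0\<^sub>v n)"
proof
  define w where "w = vec (n*s) (\<lambda>k. if k mod s = b0 then u $ (k div s) else 0)"
  show "w \<in> carrier_vec (n*s)"
    unfolding w_def by simp
  fix b assume "b < s"
  then show "block_vec n s b w = (if b = b0 then u else 0\<^sub>v n)"
    using assms block_index_less[of _ n b s] unfolding w_def block_vec_def by (auto intro!: eq_vecI)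
qed

lemma qform_kron_diagonal:
  assumes X: "X \<in> carrier_mat n n" and Y: "Y \<in> carrier_mat s s"
    and diag: "\<And>b b'. b < s \<Longrightarrow> b' < s \<Longrightarrow> b \<noteq> b' \<Longrightarrow> Y $$ (b,b') = 0"
    and v: "v \<in> carrier_vec (n*s)"
  shows "qform (kron X Y) v = (\<Sum>b<s. Y $$ (b,b) * qform X (block_vec n s b v))"
proof -
  have "qform (kron X Y) v = (\<Sum>a<n. \<Sum>b<s. \<Sum>a'<n. \<Sum>b'<s. cnj (v$(a*s+b)) * (X $$ (a,a') * Y $$ (b,b')) * v$(a'*s+b'))"
    unfolding qform_def using v by (simp add: sum_lessThan_mult_blocks index_kron_block[OF X Y])
  also have "\<dots> = (\<Sum>a<n. \<Sum>b<s. \<Sum>a'<n. cnj (v$(a*s+b)) * (X $$ (a,a') * Y $$ (b,b)) * v$(a'*s+b))"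
  proof (intro sum.cong refl)
    fix a b a' assume b: "b \<in> {..<s}"
    have "(\<Sum>b'<s. cnj (v$(a*s+b)) * (X $$ (a,a') * Y $$ (b,b')) * v$(a'*s+b')) =
          (\<Sum>b'<s. if b' = b then cnj (v$(a*s+b)) * (X $$ (a,a') * Y $$ (b,b)) * v$(a'*s+b) else 0)"
      using diag b by (intro sum.cong) auto
    then show "(\<Sum>b'<s. cnj (v$(a*s+b)) * (X $$ (a,a') * Y $$ (b,b')) * v$(a'*s+b')) =
          cnj (v$(a*s+b)) * (X $$ (a,a') * Y $$ (b,b)) * v$(a'*s+b)"
      using b by simp
  qed
  also have "\<dots> = (\<Sum>b<s. \<Sum>a<n. \<Sum>a'<n. cnj (v$(a*s+b)) * (X $$ (a,a') * Y $$ (b,b)) * v$(a'*s+b))"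
    by (rule sum.swap)
  also have "\<dots> = (\<Sum>b<s. Y $$ (b,b) * qform X (block_vec n s b v))"
    unfolding qform_def block_vec_def by (simp add: sum_distrib_left mult_ac)
  finally show ?thesis .
qed

lemma vnorm_unitary_mult:
  assumes U: "U \<in> carrier_mat N N" and unitary: "adj U * U = 1\<^sub>m N" and v: "v \<in> carrier_vec N"
  shows "vnorm (U *\<^sub>v v) = vnorm v"
proof -
  have "complex_of_real ((vnorm (U *\<^sub>v v))\<^sup>2) = complex_of_real ((vnorm v)\<^sup>2)"
    using qform_adj_mult_self[OF U v] qform_one[OF v] unitary by simp
  then have "(vnorm (U *\<^sub>v v))\<^sup>2 = (vnorm v)\<^sup>2"
    by (simp only: of_real_eq_iff)
  then show ?thesis
    by (rule power2_eq_imp_eq) (simp_all add: vnorm_nonneg)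
qed

lemma vnorm_kron_one_mult_le:
  assumes C: "C \<in> carrier_mat n n" and n: "0 < n" and y: "y \<in> carrier_vec (n*s)"
  shows "vnorm (kron C (1\<^sub>m s) *\<^sub>v y) \<le> opnorm C * vnorm y"
proof -
  have KC: "kron C (1\<^sub>m s) \<in> carrier_mat (n*s) (n*s)"
    using C by auto
  have "adj (kron C (1\<^sub>m s)) * kron C (1\<^sub>m s) = kron (adj C * C) (1\<^sub>m s)"
    unfolding adj_kron using kron_mult[OF adj_carrier[OF C] one_carrier_mat C one_carrier_mat] by simp
  then have "complex_of_real ((vnorm (kron C (1\<^sub>m s) *\<^sub>v y))\<^sup>2) = (\<Sum>b<s. qform (adj C * C) (block_vec n s b y))"
    using qform_adj_mult_self[OF KC y] qform_kron_diagonal[of "adj C * C" n "1\<^sub>m s" s y] C y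
    by (simp add: mult_carrier_mat[of _ n n])
  also have "\<dots> = of_real (\<Sum>b<s. (vnorm (C *\<^sub>v block_vec n s b y))\<^sup>2)"
    using qform_adj_mult_self[OF C block_vec_carrier] by simp
  finally have "(vnorm (kron C (1\<^sub>m s) *\<^sub>v y))\<^sup>2 = (\<Sum>b<s. (vnorm (C *\<^sub>v block_vec n s b y))\<^sup>2)"
    by (simp only: of_real_eq_iff)
  also have "\<dots> \<le> (\<Sum>b<s. (opnorm C * vnorm (block_vec n s b y))\<^sup>2)"
    by (intro sum_mono power_mono vnorm_mult_le_opnorm[OF C block_vec_carrier] vnorm_nonneg)
  also have "\<dots> = (opnorm C * vnorm y)\<^sup>2"
    by (simp only: power_mult_distrib sum_distrib_left[symmetric] sum_vnorm_block_vec[OF y])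
  finally show ?thesis
    by (rule power2_le_imp_le) (simp add: opnorm_nonneg[OF C n] vnorm_nonneg)
qed

text \<open>Factor kron C W = kron C 1 * kron 1 W; the second factor is unitary and the first
  acts blockwise by C.\<close>

lemma cmod_qform_kron_unitary_le:
  assumes C: "C \<in> carrier_mat n n" and n: "0 < n" and W: "W \<in> carrier_mat s s"
    and unitary: "adj W * W = 1\<^sub>m s" and v: "v \<in> carrier_vec (n*s)"
  shows "cmod (qform (kron C W) v) \<le> opnorm C * (vnorm v)\<^sup>2"
proof -
  have KW: "kron (1\<^sub>m n) W \<in> carrier_mat (n*s) (n*s)" and KC: "kron C (1\<^sub>m s) \<in> carrier_mat (n*s) (n*s)"
    using C W by auto
  define y where "y = kron (1\<^sub>m n) W *\<^sub>v v"
  have y: "y \<in> carrier_vec (n*s)"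
    unfolding y_def using KW v by simp
  have "adj (kron (1\<^sub>m n) W) * kron (1\<^sub>m n) W = 1\<^sub>m (n*s)"
    unfolding adj_kron using kron_mult[OF one_carrier_mat adj_carrier[OF W] one_carrier_mat W]
    by (simp add: unitary kron_one_one)
  then have norm_y: "vnorm y = vnorm v"
    unfolding y_def using vnorm_unitary_mult[OF KW _ v] by simp
  have "kron C W = kron C (1\<^sub>m s) * kron (1\<^sub>m n) W"
    using kron_mult[OF C one_carrier_mat one_carrier_mat W] C W by simp
  then have "qform (kron C W) v = vinner v (kron C (1\<^sub>m s) *\<^sub>v y)"
    unfolding qform_vinner[OF kron_carrier[OF C W] v] y_def using KC KW v by (simp add: assoc_mult_mat_vec)
  then have "cmod (qform (kron C W) v) \<le> vnorm v * vnorm (kron C (1\<^sub>m s) *\<^sub>v y)"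
    using C v by (simp add: vinner_cauchy_schwarz)
  also have "\<dots> \<le> vnorm v * (opnorm C * vnorm y)"
    by (rule mult_left_mono[OF vnorm_kron_one_mult_le[OF C n y] vnorm_nonneg])
  finally show ?thesis
    unfolding norm_y by (simp add: power2_eq_square mult_ac)
qed

section \<open>Block-diagonal matrices\<close>

lemma qform_kron_split:
  assumes X: "X \<in> carrier_mat n n" and Y: "Y \<in> carrier_mat n n"
    and D: "D \<in> carrier_mat s s" "\<And>b b'. b < s \<Longrightarrow> b' < s \<Longrightarrow> D $$ (b,b') = (if b = b' \<and> p b then 1 else 0)"
    and E: "E \<in> carrier_mat s s" "\<And>b b'. b < s \<Longrightarrow> b' < s \<Longrightarrow> E $$ (b,b') = (if b = b' \<and> \<not> p b then 1 else 0)"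
    and v: "v \<in> carrier_vec (n*s)"
  shows "qform (kron X D + kron Y E) v =
    (\<Sum>b<s. if p b then qform X (block_vec n s b v) else qform Y (block_vec n s b v))"
proof -
  have "qform (kron X D + kron Y E) v = qform (kron X D) v + qform (kron Y E) v"
    using X Y D E v by (intro qform_add) auto
  also have "\<dots> = (\<Sum>b<s. D $$ (b,b) * qform X (block_vec n s b v)) + (\<Sum>b<s. E $$ (b,b) * qform Y (block_vec n s b v))"
    using X Y D E v by (simp add: qform_kron_diagonal)
  also have "\<dots> = (\<Sum>b<s. if p b then qform X (block_vec n s b v) else qform Y (block_vec n s b v))"
    unfolding sum.distrib[symmetric] using D E by (intro sum.cong) auto
  finally show ?thesis .
qed

lemma qform_kron_split_single_block:
  assumes X: "X \<in> carrier_mat n n" and Y: "Y \<in> carrier_mat n n"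
    and D: "D \<in> carrier_mat s s" "\<And>b b'. b < s \<Longrightarrow> b' < s \<Longrightarrow> D $$ (b,b') = (if b = b' \<and> p b then 1 else 0)"
    and E: "E \<in> carrier_mat s s" "\<And>b b'. b < s \<Longrightarrow> b' < s \<Longrightarrow> E $$ (b,b') = (if b = b' \<and> \<not> p b then 1 else 0)"
    and u: "u \<in> carrier_vec n" and b0: "b0 < s"
  obtains w where "w \<in> carrier_vec (n*s)" "vnorm w = vnorm u"
    "qform (kron X D + kron Y E) w = (if p b0 then qform X u else qform Y u)"
proof -
  obtain w where w: "w \<in> carrier_vec (n*s)"
    and blocks: "\<And>b. b < s \<Longrightarrow> block_vec n s b w = (if b = b0 then u else 0\<^sub>v n)"
    using block_vec_embed[OF u b0] by blast
  have "(vnorm w)\<^sup>2 = (\<Sum>b<s. if b = b0 then (vnorm u)\<^sup>2 else 0)"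
    unfolding sum_vnorm_block_vec[OF w, symmetric] by (intro sum.cong) (auto simp: blocks)
  then have norm_w: "vnorm w = vnorm u"
    using b0 by (simp add: power2_eq_imp_eq vnorm_nonneg)
  have "qform (kron X D + kron Y E) w
      = (\<Sum>b<s. if p b then qform X (block_vec n s b w) else qform Y (block_vec n s b w))"
    by (rule qform_kron_split[OF X Y D E w])
  also have "\<dots> = (\<Sum>b<s. if b = b0 then (if p b0 then qform X u else qform Y u) else 0)"
    by (intro sum.cong) (auto simp: blocks)
  also have "\<dots> = (if p b0 then qform X u else qform Y u)"
    using b0 by simp
  finally show ?thesis
    using that w norm_w by blast
qed

text \<open>The Rayleigh quotient splits over the blocks, and a minimising vector of either summand
  can be placed in a single block.\<close>

lemma lambda_min_kron_split:
  assumes X: "X \<in> carrier_mat n n" "hermitian X" and Y: "Y \<in> carrier_mat n n" "hermitian Y"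
    and n: "0 < n"
    and D: "D \<in> carrier_mat s s" "\<And>b b'. b < s \<Longrightarrow> b' < s \<Longrightarrow> D $$ (b,b') = (if b = b' \<and> p b then 1 else 0)"
    and E: "E \<in> carrier_mat s s" "\<And>b b'. b < s \<Longrightarrow> b' < s \<Longrightarrow> E $$ (b,b') = (if b = b' \<and> \<not> p b then 1 else 0)"
    and b_in: "b_in < s" "p b_in" and b_out: "b_out < s" "\<not> p b_out"
  shows "lambda_min (kron X D + kron Y E) = min (lambda_min X) (lambda_min Y)"
proof -
  define Z where "Z = kron X D + kron Y E"
  define \<mu> where "\<mu> = min (lambda_min X) (lambda_min Y)"
  have Z: "Z \<in> carrier_mat (n*s) (n*s)"
    unfolding Z_def using X Y D E by auto
  have "adj D = D" "adj E = E"
    using D E by (auto intro!: eq_matI)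
  then have "hermitian Z"
    using X Y D E Z unfolding Z_def hermitian_def by (simp add: adj_add[of _ "n*s" "n*s"] adj_kron)
  have qform_Z: "qform Z w = (\<Sum>b<s. if p b then qform X (block_vec n s b w) else qform Y (block_vec n s b w))"
    if "w \<in> carrier_vec (n*s)" for w
    unfolding Z_def using qform_kron_split[OF X(1) Y(1) D E that] .
  have lower: "\<mu> \<le> Re (qform Z w)" if w: "w \<in> carrier_vec (n*s)" "vnorm w = 1" for w
  proof -
    have "\<mu> * (vnorm (block_vec n s b w))\<^sup>2 \<le>
        Re (if p b then qform X (block_vec n s b w) else qform Y (block_vec n s b w))" for b
    proof -
      have "\<mu> * (vnorm (block_vec n s b w))\<^sup>2 \<le> lambda_min X * (vnorm (block_vec n s b w))\<^sup>2"
        "\<mu> * (vnorm (block_vec n s b w))\<^sup>2 \<le> lambda_min Y * (vnorm (block_vec n s b w))\<^sup>2"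
        unfolding \<mu>_def by (simp_all add: mult_right_mono)
      then show ?thesis
        using lambda_min_le_qform[OF X(1) n X(2) block_vec_carrier]
          lambda_min_le_qform[OF Y(1) n Y(2) block_vec_carrier] by (cases "p b") (auto intro: order_trans)
    qed
    then have "\<mu> * (\<Sum>b<s. (vnorm (block_vec n s b w))\<^sup>2) \<le> Re (qform Z w)"
      unfolding qform_Z[OF w(1)] Re_sum sum_distrib_left by (rule sum_mono)
    then show ?thesis
      using w sum_vnorm_block_vec[of w n s] by simp
  qed
  have embed: "\<exists>w \<in> carrier_vec (n*s). vnorm w = 1 \<and> qform Z w = (if p b0 then qform X u else qform Y u)"
    if u: "u \<in> carrier_vec n" "vnorm u = 1" and b0: "b0 < s" for u b0
    using qform_kron_split_single_block[OF X(1) Y(1) D E u(1) b0] u(2) unfolding Z_def by metis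
  obtain x where x: "x \<in> carrier_vec n" "vnorm x = 1" "Re (qform X x) = lambda_min X"
    using lambda_min_attained[OF X(1) n X(2)] by blast
  obtain y where y: "y \<in> carrier_vec n" "vnorm y = 1" "Re (qform Y y) = lambda_min Y"
    using lambda_min_attained[OF Y(1) n Y(2)] by blast
  obtain w where "w \<in> carrier_vec (n*s)" "vnorm w = 1" "Re (qform Z w) = \<mu>"
  proof (cases "lambda_min X \<le> lambda_min Y")
    case True
    then show ?thesis
      using embed[OF x(1,2) b_in(1)] that b_in(2) x(3) unfolding \<mu>_def by auto
  next
    case False
    then show ?thesis
      using embed[OF y(1,2) b_out(1)] that b_out(2) y(3) unfolding \<mu>_def by auto
  qed
  from lambda_min_eqI[OF Z \<open>hermitian Z\<close> this lower] show ?thesis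
    unfolding Z_def \<mu>_def .
qed

section \<open>The projections P and Q\<close>

lemma projP_carrier [simp]: "projP m \<in> carrier_mat (2*m) (2*m)"
  unfolding projP_def by auto

lemma projQ_carrier [simp]: "projQ m \<in> carrier_mat (2*m) (2*m)"
  unfolding projQ_def by auto

lemma index_projP: "b < 2*m \<Longrightarrow> b' < 2*m \<Longrightarrow> projP m $$ (b,b') = (if b = b' \<and> b < m then 1 else 0)"
  unfolding projP_def by auto

lemma index_projQ: "b < 2*m \<Longrightarrow> b' < 2*m \<Longrightarrow> projQ m $$ (b,b') = (if b = b' \<and> \<not> b < m then 1 else 0)"
  unfolding projQ_def by auto

lemma adj_projP: "adj (projP m) = projP m"
  unfolding projP_def by (intro eq_matI) auto

lemma adj_projQ: "adj (projQ m) = projQ m"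
  unfolding projQ_def by (intro eq_matI) auto

lemma projP_plus_projQ: "projP m + projQ m = 1\<^sub>m (2*m)"
  unfolding projP_def projQ_def by (intro eq_matI) auto

lemma mult_diagonal_mat:
  assumes Y: "Y \<in> carrier_mat s s" "\<And>b b'. b < s \<Longrightarrow> b' < s \<Longrightarrow> Y $$ (b,b') = (if b = b' then y b else 0)"
    and Z: "Z \<in> carrier_mat s s" "\<And>b b'. b < s \<Longrightarrow> b' < s \<Longrightarrow> Z $$ (b,b') = (if b = b' then z b else 0)"
  shows "Y * Z = mat s s (\<lambda>(b,b'). if b = b' then y b * z b else 0)"
proof (rule eq_matI)
  fix i j assume "i < dim_row (mat s s (\<lambda>(b,b'). if b = b' then y b * z b else 0))"
    "j < dim_col (mat s s (\<lambda>(b,b'). if b = b' then y b * z b else 0))"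
  then have i: "i < s" and j: "j < s"
    by auto
  have "(Y * Z) $$ (i,j) = (\<Sum>k<s. Y $$ (i,k) * Z $$ (k,j))"
    using Y Z i j by (simp add: scalar_prod_def row_def col_def atLeast0LessThan)
  also have "\<dots> = (\<Sum>k<s. if k = i then (if i = j then y i * z i else 0) else 0)"
    using Y Z i j by (intro sum.cong) auto
  finally show "(Y * Z) $$ (i,j) = mat s s (\<lambda>(b,b'). if b = b' then y b * z b else 0) $$ (i,j)"
    using i j by simp
qed (use Y Z in auto)

lemma projP_idem: "projP m * projP m = projP m"
  by (subst mult_diagonal_mat[where s = "2*m" and y = "\<lambda>b. if b < m then 1 else 0" and z = "\<lambda>b. if b < m then 1 else 0"])
    (auto simp: index_projP projP_def intro!: eq_matI)

lemma projQ_idem: "projQ m * projQ m = projQ m"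
  by (subst mult_diagonal_mat[where s = "2*m" and y = "\<lambda>b. if b < m then 0 else 1" and z = "\<lambda>b. if b < m then 0 else 1"])
    (auto simp: index_projQ projQ_def intro!: eq_matI)

lemma projP_mult_projQ: "projP m * projQ m = 0\<^sub>m (2*m) (2*m)"
  by (subst mult_diagonal_mat[where s = "2*m" and y = "\<lambda>b. if b < m then 1 else 0" and z = "\<lambda>b. if b < m then 0 else 1"])
    (auto simp: index_projP index_projQ intro!: eq_matI)

lemma projQ_mult_projP: "projQ m * projP m = 0\<^sub>m (2*m) (2*m)"
  by (subst mult_diagonal_mat[where s = "2*m" and y = "\<lambda>b. if b < m then 0 else 1" and z = "\<lambda>b. if b < m then 1 else 0"])
    (auto simp: index_projP index_projQ intro!: eq_matI)


section \<open>The square of the localizer\<close>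

lemma abs_sqrt_diff_le:
  fixes a b c :: real
  assumes "0 \<le> a" "0 \<le> b" "\<bar>a - b\<bar> \<le> c"
  shows "\<bar>sqrt a - sqrt b\<bar> \<le> sqrt c"
proof -
  have le: "sqrt x - sqrt y \<le> sqrt \<bar>x - y\<bar>" if "0 \<le> y" "y \<le> x" for x y :: real
    using sqrt_add_le_add_sqrt[of y "x - y"] that by simp
  have "\<bar>sqrt a - sqrt b\<bar> \<le> sqrt \<bar>a - b\<bar>"
    using le[of b a] le[of a b] assms(1,2) by (cases "b \<le> a") (simp_all add: abs_minus_commute)
  also have "\<dots> \<le> sqrt c"
    using assms(3) by simp
  finally show ?thesis .
qed

lemma sum_lessThan_square_split:
  fixes y :: "nat \<Rightarrow> nat \<Rightarrow> 'a::comm_monoid_add"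
  shows "(\<Sum>i<d. \<Sum>j<d. y i j) = (\<Sum>i<d. y i i) + (\<Sum>i<d. \<Sum>j\<in>{i<..<d}. y i j + y j i)"
proof (induction d)
  case (Suc d)
  have "{i<..<Suc d} = insert d {i<..<d}" if "i < d" for i
    using that by auto
  then have "(\<Sum>i<d. \<Sum>j\<in>{i<..<Suc d}. y i j + y j i) = (\<Sum>i<d. (\<Sum>j\<in>{i<..<d}. y i j + y j i) + (y i d + y d i))"
    by (intro sum.cong) (auto simp: add.commute)
  moreover have "{d<..<Suc d} = {}"
    by auto
  moreover have "(\<Sum>i<Suc d. \<Sum>j<Suc d. y i j) = (\<Sum>i<d. \<Sum>j<d. y i j) + (\<Sum>i<d. y i d) + (\<Sum>j<d. y d j) + y d d"
    by (simp add: sum.distrib add_ac)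
  ultimately show ?case
    using Suc by (simp add: sum.distrib add_ac)
qed simp

lemma mult_shift_mat:
  fixes A B :: "complex mat"
  assumes A: "A \<in> carrier_mat n n" and B: "B \<in> carrier_mat n n"
  shows "(A - a \<cdot>\<^sub>m 1\<^sub>m n) * (B - b \<cdot>\<^sub>m 1\<^sub>m n) = (A * B - a \<cdot>\<^sub>m B) - b \<cdot>\<^sub>m (A - a \<cdot>\<^sub>m 1\<^sub>m n)"
proof -
  have A': "A - a \<cdot>\<^sub>m 1\<^sub>m n \<in> carrier_mat n n"
    using A by auto
  have "(A - a \<cdot>\<^sub>m 1\<^sub>m n) * (B - b \<cdot>\<^sub>m 1\<^sub>m n) = (A - a \<cdot>\<^sub>m 1\<^sub>m n) * B - (A - a \<cdot>\<^sub>m 1\<^sub>m n) * (b \<cdot>\<^sub>m 1\<^sub>m n)"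
    using mult_minus_distrib_mat[OF A' B, of "b \<cdot>\<^sub>m 1\<^sub>m n"] by simp
  also have "(A - a \<cdot>\<^sub>m 1\<^sub>m n) * B = A * B - a \<cdot>\<^sub>m B"
    using minus_mult_distrib_mat[OF A _ B, of "a \<cdot>\<^sub>m 1\<^sub>m n"] mult_smult_assoc_mat[OF one_carrier_mat B] B by simp
  also have "(A - a \<cdot>\<^sub>m 1\<^sub>m n) * (b \<cdot>\<^sub>m 1\<^sub>m n) = b \<cdot>\<^sub>m (A - a \<cdot>\<^sub>m 1\<^sub>m n)"
    using mult_smult_distrib[OF A' one_carrier_mat] A' by simp
  finally show ?thesis .
qed

lemma commutator_shift:
  fixes A B :: "complex mat"
  assumes A: "A \<in> carrier_mat n n" and B: "B \<in> carrier_mat n n"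
  shows "(A - a \<cdot>\<^sub>m 1\<^sub>m n) * (B - b \<cdot>\<^sub>m 1\<^sub>m n) - (B - b \<cdot>\<^sub>m 1\<^sub>m n) * (A - a \<cdot>\<^sub>m 1\<^sub>m n) = A * B - B * A"
  unfolding mult_shift_mat[OF A B] mult_shift_mat[OF B A]
  using A B by (intro eq_matI) (auto simp: algebra_simps)

locale localizer_data =
  fixes n d m :: nat and \<Gamma> A :: "nat \<Rightarrow> complex mat" and B :: "complex mat"
    and lam :: "nat \<Rightarrow> real" and nu :: complex
  assumes clifford: "clifford_rep d m \<Gamma>"
    and A: "\<forall>i<d. A i \<in> carrier_mat n n \<and> hermitian (A i)"
    and B: "B \<in> carrier_mat n n"
begin

abbreviation "Ash i \<equiv> shiftA n A lam i"
abbreviation "Bsh \<equiv> shiftB n B nu"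
abbreviation "L \<equiv> localizer n d m \<Gamma> A B lam nu"

definition Hpart :: "complex mat" where
  "Hpart = msum (2*m*n) (2*m*n) (\<lambda>i. kron (Ash i) (\<Gamma> i)) d"

definition Gterm :: "nat \<Rightarrow> complex mat" where
  "Gterm i = kron (Ash i * Bsh) (\<Gamma> i * projP m)"

definition Hterm :: "nat \<Rightarrow> complex mat" where
  "Hterm i = kron (Ash i * adj Bsh) (\<Gamma> i * projQ m)"

definition Asq :: "complex mat" where
  "Asq = msum n n (\<lambda>i. Ash i * Ash i) d"

definition RQ :: "complex mat" where
  "RQ = Asq + adj Bsh * Bsh"

definition LQ :: "complex mat" where
  "LQ = Asq + Bsh * adj Bsh"

definition Qblock :: "complex mat" where
  "Qblock = kron RQ (projP m) + kron LQ (projQ m)"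

definition commutator :: "nat \<Rightarrow> nat \<Rightarrow> complex mat" where
  "commutator i j = A i * A j - A j * A i"

lemma A_carrier: "i < d \<Longrightarrow> A i \<in> carrier_mat n n"
  using A by auto

lemma Ash_carrier: "i < d \<Longrightarrow> Ash i \<in> carrier_mat n n"
  unfolding shiftA_def using A_carrier by auto

lemma adj_Ash: "i < d \<Longrightarrow> adj (Ash i) = Ash i"
  unfolding shiftA_def using A by (simp add: adj_minus[of _ n n] adj_smult hermitian_def)

lemma Bsh_carrier: "Bsh \<in> carrier_mat n n"
  unfolding shiftB_def using B by auto

lemma Gamma_carrier: "i < d \<Longrightarrow> \<Gamma> i \<in> carrier_mat (2*m) (2*m)"
  using clifford unfolding clifford_rep_def by blast

lemma adj_Gamma: "i < d \<Longrightarrow> adj (\<Gamma> i) = \<Gamma> i"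
  using clifford unfolding clifford_rep_def hermitian_def by blast

lemma Gamma_square: "i < d \<Longrightarrow> \<Gamma> i * \<Gamma> i = 1\<^sub>m (2*m)"
  using clifford unfolding clifford_rep_def by blast

lemma Gamma_anticomm: "i < d \<Longrightarrow> j < d \<Longrightarrow> i \<noteq> j \<Longrightarrow> \<Gamma> i * \<Gamma> j = - (\<Gamma> j * \<Gamma> i)"
  using clifford unfolding clifford_rep_def by blast

lemma kron_carrier_2mn:
  "Y \<in> carrier_mat n n \<Longrightarrow> Z \<in> carrier_mat (2*m) (2*m) \<Longrightarrow> kron Y Z \<in> carrier_mat (2*m*n) (2*m*n)"
  using kron_carrier[of Y n n Z "2*m" "2*m"] by (simp add: mult.commute)

lemma Hpart_carrier: "Hpart \<in> carrier_mat (2*m*n) (2*m*n)"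
  unfolding Hpart_def using kron_carrier_2mn Ash_carrier Gamma_carrier by auto

lemma Gterm_carrier: "i < d \<Longrightarrow> Gterm i \<in> carrier_mat (2*m*n) (2*m*n)"
  unfolding Gterm_def using Ash_carrier Bsh_carrier Gamma_carrier
  by (intro kron_carrier_2mn mult_carrier_mat[of _ n n _ n] mult_carrier_mat[of _ "2*m" "2*m" _ "2*m"]) auto

lemma Hterm_carrier: "i < d \<Longrightarrow> Hterm i \<in> carrier_mat (2*m*n) (2*m*n)"
  unfolding Hterm_def using Ash_carrier Bsh_carrier Gamma_carrier
  by (intro kron_carrier_2mn mult_carrier_mat[of _ n n _ n] mult_carrier_mat[of _ "2*m" "2*m" _ "2*m"]) auto

lemma Asq_carrier: "Asq \<in> carrier_mat n n"
  unfolding Asq_def using Ash_carrier by (intro msum_carrier mult_carrier_mat[of _ n n _ n]) auto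

lemma commutator_carrier: "i < d \<Longrightarrow> j < d \<Longrightarrow> commutator i j \<in> carrier_mat n n"
  unfolding commutator_def using A_carrier[of i] A_carrier[of j] by auto

lemma localizer_eq: "L = Hpart + kron Bsh (projP m) - kron (adj Bsh) (projQ m)"
  unfolding localizer_def Hpart_def ..

lemma localizer_carrier: "L \<in> carrier_mat (2*m*n) (2*m*n)"
  unfolding localizer_eq using Hpart_carrier Bsh_carrier by (intro minus_carrier_mat add_carrier_mat kron_carrier_2mn) auto

lemma Fmat_eq: "Fmat n d m \<Gamma> A B lam nu =
    msum (2*m*n) (2*m*n) (\<lambda>i. Gterm i + adj (Gterm i)) d - msum (2*m*n) (2*m*n) (\<lambda>i. Hterm i + adj (Hterm i)) d"
  unfolding Fmat_def Let_def Gterm_def Hterm_def ..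

lemma Fmat_carrier: "Fmat n d m \<Gamma> A B lam nu \<in> carrier_mat (2*m*n) (2*m*n)"
  unfolding Fmat_eq by (intro minus_carrier_mat msum_carrier add_carrier_mat adj_carrier Gterm_carrier Hterm_carrier)

lemma adj_Hpart: "adj Hpart = Hpart"
proof -
  have "adj Hpart = msum (2*m*n) (2*m*n) (\<lambda>i. adj (kron (Ash i) (\<Gamma> i))) d"
    unfolding Hpart_def using kron_carrier_2mn Ash_carrier Gamma_carrier by (intro adj_msum) auto
  also have "\<dots> = Hpart"
    unfolding Hpart_def by (rule msum_cong) (simp add: adj_kron adj_Ash adj_Gamma)
  finally show ?thesis .
qed

lemma adj_localizer: "adj L = Hpart + kron (adj Bsh) (projP m) - kron Bsh (projQ m)"
  unfolding localizer_eq using Hpart_carrier Bsh_carrier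
  by (simp add: adj_minus[of _ "2*m*n" "2*m*n"] adj_add[of _ "2*m*n" "2*m*n"] kron_carrier_2mn
      adj_Hpart adj_kron adj_projP adj_projQ)

lemma adj_Gterm: "i < d \<Longrightarrow> adj (Gterm i) = kron (adj Bsh * Ash i) (projP m * \<Gamma> i)"
  unfolding Gterm_def adj_kron using Ash_carrier Bsh_carrier Gamma_carrier
  by (simp add: adj_mult[of _ n n _ n] adj_mult[of _ "2*m" "2*m" _ "2*m"] adj_Ash adj_Gamma adj_projP)

lemma adj_Hterm: "i < d \<Longrightarrow> adj (Hterm i) = kron (Bsh * Ash i) (projQ m * \<Gamma> i)"
  unfolding Hterm_def adj_kron using Ash_carrier Bsh_carrier Gamma_carrier
  by (simp add: adj_mult[of _ n n _ n] adj_mult[of _ "2*m" "2*m" _ "2*m"] adj_Ash adj_Gamma adj_projQ)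

lemma kron_mult_Hpart:
  assumes "Y \<in> carrier_mat n n" "Z \<in> carrier_mat (2*m) (2*m)"
  shows "kron Y Z * Hpart = msum (2*m*n) (2*m*n) (\<lambda>i. kron (Y * Ash i) (Z * \<Gamma> i)) d"
  unfolding Hpart_def using assms Ash_carrier Gamma_carrier
  by (subst msum_mult_left[of _ _ "2*m*n"]) (auto intro!: msum_cong kron_carrier_2mn kron_mult)

lemma Hpart_mult_kron:
  assumes "Y \<in> carrier_mat n n" "Z \<in> carrier_mat (2*m) (2*m)"
  shows "Hpart * kron Y Z = msum (2*m*n) (2*m*n) (\<lambda>i. kron (Ash i * Y) (\<Gamma> i * Z)) d"
  unfolding Hpart_def using assms Ash_carrier Gamma_carrier
  by (subst msum_mult_right[of _ _ "2*m*n"]) (auto intro!: msum_cong kron_carrier_2mn kron_mult)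

lemma Hpart_square:
  "Hpart * Hpart = msum (2*m*n) (2*m*n) (\<lambda>j. msum (2*m*n) (2*m*n) (\<lambda>i. kron (Ash i * Ash j) (\<Gamma> i * \<Gamma> j)) d) d"
proof -
  have "Hpart * msum (2*m*n) (2*m*n) (\<lambda>j. kron (Ash j) (\<Gamma> j)) d
      = msum (2*m*n) (2*m*n) (\<lambda>j. Hpart * kron (Ash j) (\<Gamma> j)) d"
    using Hpart_carrier Ash_carrier Gamma_carrier by (intro msum_mult_left kron_carrier_2mn) auto
  then have "Hpart * Hpart = msum (2*m*n) (2*m*n) (\<lambda>j. Hpart * kron (Ash j) (\<Gamma> j)) d"
    unfolding Hpart_def[symmetric] .
  also have "\<dots> = msum (2*m*n) (2*m*n) (\<lambda>j. msum (2*m*n) (2*m*n) (\<lambda>i. kron (Ash i * Ash j) (\<Gamma> i * \<Gamma> j)) d) d"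
    using Ash_carrier Gamma_carrier by (intro msum_cong Hpart_mult_kron)
  finally show ?thesis .
qed

lemma qform_kron_Gamma_square:
  assumes i: "i < d" and v: "v \<in> carrier_vec (2*m*n)"
  shows "qform (kron (Ash i * Ash i) (\<Gamma> i * \<Gamma> i)) v =
    qform (kron (Ash i * Ash i) (projP m)) v + qform (kron (Ash i * Ash i) (projQ m)) v"
proof -
  have AA: "Ash i * Ash i \<in> carrier_mat n n"
    using Ash_carrier[OF i] by auto
  have "kron (Ash i * Ash i) (\<Gamma> i * \<Gamma> i) = kron (Ash i * Ash i) (projP m) + kron (Ash i * Ash i) (projQ m)"
    unfolding Gamma_square[OF i] projP_plus_projQ[symmetric] by (rule kron_add_right[OF projP_carrier projQ_carrier])
  then show ?thesis
    using qform_add[OF kron_carrier_2mn[OF AA projP_carrier] kron_carrier_2mn[OF AA projQ_carrier] v] by simp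
qed

text \<open>Anticommutation of the generators turns the symmetric pair of cross terms into a commutator;
  the shifts by lambda cancel in it.\<close>

lemma qform_kron_Gamma_anticomm:
  assumes i: "i < d" and j: "j < d" and ij: "i \<noteq> j" and v: "v \<in> carrier_vec (2*m*n)"
  shows "qform (kron (Ash i * Ash j) (\<Gamma> i * \<Gamma> j)) v + qform (kron (Ash j * Ash i) (\<Gamma> j * \<Gamma> i)) v
     = qform (kron (commutator i j) (\<Gamma> i * \<Gamma> j)) v"
proof -
  define W where "W = \<Gamma> i * \<Gamma> j"
  have W: "W \<in> carrier_mat (2*m) (2*m)"
    unfolding W_def using Gamma_carrier[OF i] Gamma_carrier[OF j] by auto
  have AA: "Ash i * Ash j \<in> carrier_mat n n" "Ash j * Ash i \<in> carrier_mat n n"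
    using Ash_carrier[OF i] Ash_carrier[OF j] by auto
  have "kron (Ash j * Ash i) (\<Gamma> j * \<Gamma> i) = - kron (Ash j * Ash i) W"
    unfolding W_def using Gamma_anticomm[OF j i] ij by (simp add: kron_uminus_right)
  then have "qform (kron (Ash i * Ash j) W) v + qform (kron (Ash j * Ash i) (\<Gamma> j * \<Gamma> i)) v
      = qform (kron (Ash i * Ash j) W - kron (Ash j * Ash i) W) v"
    using AA W v by (simp add: qform_uminus[of _ "2*m*n"] qform_minus[of _ "2*m*n"] kron_carrier_2mn)
  also have "kron (Ash i * Ash j) W - kron (Ash j * Ash i) W = kron (Ash i * Ash j - Ash j * Ash i) W"
    by (rule kron_minus_left[symmetric, OF AA])
  also have "Ash i * Ash j - Ash j * Ash i = commutator i j"
    unfolding shiftA_def commutator_def by (rule commutator_shift[OF A_carrier[OF i] A_carrier[OF j]])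
  finally show ?thesis
    unfolding W_def .
qed

lemma qform_Hpart_square:
  assumes v: "v \<in> carrier_vec (2*m*n)"
  shows "qform (Hpart * Hpart) v =
    (\<Sum>i<d. qform (kron (Ash i * Ash i) (projP m)) v) + (\<Sum>i<d. qform (kron (Ash i * Ash i) (projQ m)) v)
    + (\<Sum>i<d. \<Sum>j\<in>{i<..<d}. qform (kron (commutator i j) (\<Gamma> i * \<Gamma> j)) v)"
proof -
  define T where "T i j = kron (Ash i * Ash j) (\<Gamma> i * \<Gamma> j)" for i j
  have T: "T i j \<in> carrier_mat (2*m*n) (2*m*n)" if "i < d" "j < d" for i j
    unfolding T_def using that Ash_carrier Gamma_carrier
    by (intro kron_carrier_2mn mult_carrier_mat[of _ n n _ n] mult_carrier_mat[of _ "2*m" "2*m" _ "2*m"]) auto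
  have "qform (Hpart * Hpart) v = (\<Sum>j<d. \<Sum>i<d. qform (T i j) v)"
    unfolding Hpart_square T_def[symmetric] using T v by (simp add: qform_msum[of _ _ "2*m*n"])
  also have "\<dots> = (\<Sum>i<d. \<Sum>j<d. qform (T i j) v)"
    by (rule sum.swap)
  also have "\<dots> = (\<Sum>i<d. qform (T i i) v) + (\<Sum>i<d. \<Sum>j\<in>{i<..<d}. qform (T i j) v + qform (T j i) v)"
    by (rule sum_lessThan_square_split)
  finally show ?thesis
    unfolding T_def using v by (simp add: qform_kron_Gamma_square qform_kron_Gamma_anticomm sum.distrib)
qed

lemma qform_Fmat:
  assumes v: "v \<in> carrier_vec (2*m*n)"
  shows "qform (Fmat n d m \<Gamma> A B lam nu) v =
    (\<Sum>i<d. qform (Gterm i) v) + (\<Sum>i<d. qform (adj (Gterm i)) v)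
    - ((\<Sum>i<d. qform (Hterm i) v) + (\<Sum>i<d. qform (adj (Hterm i)) v))"
proof -
  have G: "\<And>i. i < d \<Longrightarrow> Gterm i + adj (Gterm i) \<in> carrier_mat (2*m*n) (2*m*n)"
    and H: "\<And>i. i < d \<Longrightarrow> Hterm i + adj (Hterm i) \<in> carrier_mat (2*m*n) (2*m*n)"
    using Gterm_carrier Hterm_carrier by auto
  show ?thesis
    unfolding Fmat_eq using G H v Gterm_carrier Hterm_carrier
    by (simp add: qform_minus[of _ "2*m*n"] qform_msum[of _ _ "2*m*n"] qform_add[of _ "2*m*n"] sum.distrib)
qed

lemma qform_Qblock:
  assumes v: "v \<in> carrier_vec (2*m*n)"
  shows "qform Qblock v =
    (\<Sum>i<d. qform (kron (Ash i * Ash i) (projP m)) v) + qform (kron (adj Bsh * Bsh) (projP m)) v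
    + (\<Sum>i<d. qform (kron (Ash i * Ash i) (projQ m)) v) + qform (kron (Bsh * adj Bsh) (projQ m)) v"
proof -
  have AA: "\<And>i. i < d \<Longrightarrow> Ash i * Ash i \<in> carrier_mat n n"
    and XX: "adj Bsh * Bsh \<in> carrier_mat n n" "Bsh * adj Bsh \<in> carrier_mat n n"
    using Ash_carrier Bsh_carrier by (auto intro: mult_carrier_mat[of _ n n _ n])
  have qform_Asq: "qform (kron Asq Z) v = (\<Sum>i<d. qform (kron (Ash i * Ash i) Z) v)"
    if Z: "Z \<in> carrier_mat (2*m) (2*m)" for Z
  proof -
    have "kron Asq Z = msum (2*m*n) (2*m*n) (\<lambda>i. kron (Ash i * Ash i) Z) d"
      unfolding Asq_def using kron_msum_left[of d "\<lambda>i. Ash i * Ash i" n n Z] AA Z by (simp add: mult.commute)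
    then show ?thesis
      using AA Z v by (simp add: qform_msum[of _ _ "2*m*n"] kron_carrier_2mn)
  qed
  show ?thesis
    unfolding Qblock_def RQ_def LQ_def using Asq_carrier XX v
    by (simp add: kron_add_left[of _ n n] qform_add[of _ "2*m*n"] kron_carrier_2mn qform_Asq)
qed

lemma Hpart_cross_terms:
  shows "kron (adj Bsh) (projP m) * Hpart = msum (2*m*n) (2*m*n) (\<lambda>i. adj (Gterm i)) d"
    and "kron Bsh (projQ m) * Hpart = msum (2*m*n) (2*m*n) (\<lambda>i. adj (Hterm i)) d"
    and "Hpart * kron Bsh (projP m) = msum (2*m*n) (2*m*n) Gterm d"
    and "Hpart * kron (adj Bsh) (projQ m) = msum (2*m*n) (2*m*n) Hterm d"
proof -
  have X: "Bsh \<in> carrier_mat n n" "adj Bsh \<in> carrier_mat n n"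
    using Bsh_carrier by auto
  show "kron (adj Bsh) (projP m) * Hpart = msum (2*m*n) (2*m*n) (\<lambda>i. adj (Gterm i)) d"
    unfolding kron_mult_Hpart[OF X(2) projP_carrier] by (intro msum_cong) (simp add: adj_Gterm)
  show "kron Bsh (projQ m) * Hpart = msum (2*m*n) (2*m*n) (\<lambda>i. adj (Hterm i)) d"
    unfolding kron_mult_Hpart[OF X(1) projQ_carrier] by (intro msum_cong) (simp add: adj_Hterm)
  show "Hpart * kron Bsh (projP m) = msum (2*m*n) (2*m*n) Gterm d"
    unfolding Hpart_mult_kron[OF X(1) projP_carrier] by (intro msum_cong) (simp add: Gterm_def)
  show "Hpart * kron (adj Bsh) (projQ m) = msum (2*m*n) (2*m*n) Hterm d"
    unfolding Hpart_mult_kron[OF X(2) projQ_carrier] by (intro msum_cong) (simp add: Hterm_def)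
qed

lemma kron_Bsh_products:
  shows "kron (adj Bsh) (projP m) * kron Bsh (projP m) = kron (adj Bsh * Bsh) (projP m)"
    and "kron Bsh (projQ m) * kron (adj Bsh) (projQ m) = kron (Bsh * adj Bsh) (projQ m)"
    and "kron Bsh (projQ m) * kron Bsh (projP m) = 0\<^sub>m (2*m*n) (2*m*n)"
    and "kron (adj Bsh) (projP m) * kron (adj Bsh) (projQ m) = 0\<^sub>m (2*m*n) (2*m*n)"
proof -
  have X: "Bsh \<in> carrier_mat n n" "adj Bsh \<in> carrier_mat n n"
    using Bsh_carrier by auto
  show "kron (adj Bsh) (projP m) * kron Bsh (projP m) = kron (adj Bsh * Bsh) (projP m)"
    using kron_mult[OF X(2) projP_carrier X(1) projP_carrier] by (simp add: projP_idem)
  show "kron Bsh (projQ m) * kron (adj Bsh) (projQ m) = kron (Bsh * adj Bsh) (projQ m)"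
    using kron_mult[OF X(1) projQ_carrier X(2) projQ_carrier] by (simp add: projQ_idem)
  show "kron Bsh (projQ m) * kron Bsh (projP m) = 0\<^sub>m (2*m*n) (2*m*n)"
    using kron_mult[OF X(1) projQ_carrier X(1) projP_carrier] kron_zero_right[of "Bsh * Bsh" "2*m" "2*m"] X(1)
    by (simp add: projQ_mult_projP mult.commute)
  show "kron (adj Bsh) (projP m) * kron (adj Bsh) (projQ m) = 0\<^sub>m (2*m*n) (2*m*n)"
    using kron_mult[OF X(2) projP_carrier X(2) projQ_carrier] kron_zero_right[of "adj Bsh * adj Bsh" "2*m" "2*m"] X(1)
    by (simp add: projP_mult_projQ mult.commute)
qed

text \<open>Expanding adj L * L: the products of the Hermitian part with the B-terms are the G_i, H_i
  and their adjoints, the squares of the B-terms give the B-parts of Qblock, and the mixed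
  products of B-terms vanish since P * Q = 0.\<close>

lemma qform_localizer_square:
  assumes v: "v \<in> carrier_vec (2*m*n)"
  shows "qform (adj L * L) v = qform Qblock v
    + (\<Sum>i<d. \<Sum>j\<in>{i<..<d}. qform (kron (commutator i j) (\<Gamma> i * \<Gamma> j)) v)
    + qform (Fmat n d m \<Gamma> A B lam nu) v"
proof -
  have X: "Bsh \<in> carrier_mat n n" "adj Bsh \<in> carrier_mat n n"
    using Bsh_carrier by auto
  note K = kron_carrier_2mn[OF X(1) projP_carrier] kron_carrier_2mn[OF X(1) projQ_carrier]
    kron_carrier_2mn[OF X(2) projP_carrier] kron_carrier_2mn[OF X(2) projQ_carrier]
  have sums: "qform (msum (2*m*n) (2*m*n) Gterm d) v = (\<Sum>i<d. qform (Gterm i) v)"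
    "qform (msum (2*m*n) (2*m*n) Hterm d) v = (\<Sum>i<d. qform (Hterm i) v)"
    "qform (msum (2*m*n) (2*m*n) (\<lambda>i. adj (Gterm i)) d) v = (\<Sum>i<d. qform (adj (Gterm i)) v)"
    "qform (msum (2*m*n) (2*m*n) (\<lambda>i. adj (Hterm i)) d) v = (\<Sum>i<d. qform (adj (Hterm i)) v)"
    using Gterm_carrier Hterm_carrier v by (auto intro!: qform_msum)
  have "qform (adj L * L) v =
      qform (Hpart * Hpart) v + (\<Sum>i<d. qform (adj (Gterm i)) v) - (\<Sum>i<d. qform (adj (Hterm i)) v)
      + (\<Sum>i<d. qform (Gterm i) v) + qform (kron (adj Bsh * Bsh) (projP m)) v
      - (\<Sum>i<d. qform (Hterm i) v) + qform (kron (Bsh * adj Bsh) (projQ m)) v"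
    unfolding adj_localizer
    unfolding localizer_eq qform_mult_sum3[OF Hpart_carrier K(3) K(2) Hpart_carrier K(1) K(4) v]
    by (simp only: Hpart_cross_terms kron_Bsh_products sums qform_zero_mat[OF v]) simp
  then show ?thesis
    unfolding qform_Hpart_square[OF v] qform_Qblock[OF v] qform_Fmat[OF v] by (simp add: algebra_simps)
qed

lemma Gamma_mult_unitary:
  assumes i: "i < d" and j: "j < d"
  shows "adj (\<Gamma> i * \<Gamma> j) * (\<Gamma> i * \<Gamma> j) = 1\<^sub>m (2*m)"
proof -
  note G = Gamma_carrier[OF i] Gamma_carrier[OF j]
  have "adj (\<Gamma> i * \<Gamma> j) * (\<Gamma> i * \<Gamma> j) = \<Gamma> j * ((\<Gamma> i * \<Gamma> i) * \<Gamma> j)"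
    using G by (simp add: adj_mult[OF G] adj_Gamma i j assoc_mult_mat[of _ "2*m" "2*m" _ "2*m" _ "2*m"])
  then show ?thesis
    using G by (simp add: Gamma_square i j)
qed

lemma cmod_qform_localizer_square_diff_le:
  assumes n: "0 < n" and v: "v \<in> carrier_vec (2*m*n)" "vnorm v = 1"
  shows "cmod (qform (adj L * L) v - qform Qblock v)
    \<le> (\<Sum>i<d. \<Sum>j\<in>{i<..<d}. opnorm (A i * A j - A j * A i)) + opnorm (Fmat n d m \<Gamma> A B lam nu)"
proof -
  have v': "v \<in> carrier_vec (n*(2*m))"
    using v by (simp add: mult.commute)
  have comm: "cmod (qform (kron (commutator i j) (\<Gamma> i * \<Gamma> j)) v) \<le> opnorm (A i * A j - A j * A i)"
    if "i < d" "j < d" for i j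
    using cmod_qform_kron_unitary_le[OF commutator_carrier[OF that] n _ Gamma_mult_unitary[OF that] v'] v(2)
      mult_carrier_mat[OF Gamma_carrier[OF that(1)] Gamma_carrier[OF that(2)]] unfolding commutator_def by simp
  have "cmod (\<Sum>i<d. \<Sum>j\<in>{i<..<d}. qform (kron (commutator i j) (\<Gamma> i * \<Gamma> j)) v)
      \<le> (\<Sum>i<d. \<Sum>j\<in>{i<..<d}. cmod (qform (kron (commutator i j) (\<Gamma> i * \<Gamma> j)) v))"
    by (rule order_trans[OF norm_sum sum_mono[OF norm_sum]])
  also have "\<dots> \<le> (\<Sum>i<d. \<Sum>j\<in>{i<..<d}. opnorm (A i * A j - A j * A i))"
    using comm by (intro sum_mono) auto
  finally have comm_sum: "cmod (\<Sum>i<d. \<Sum>j\<in>{i<..<d}. qform (kron (commutator i j) (\<Gamma> i * \<Gamma> j)) v)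
      \<le> (\<Sum>i<d. \<Sum>j\<in>{i<..<d}. opnorm (A i * A j - A j * A i))" .
  have F: "cmod (qform (Fmat n d m \<Gamma> A B lam nu) v) \<le> opnorm (Fmat n d m \<Gamma> A B lam nu)"
    using cmod_qform_le_opnorm[OF Fmat_carrier v(1)] v(2) by simp
  show ?thesis
    unfolding qform_localizer_square[OF v(1)]
    using order_trans[OF norm_triangle_ineq add_mono[OF comm_sum F]] by simp
qed

lemma RQ_carrier: "RQ \<in> carrier_mat n n"
  unfolding RQ_def using Asq_carrier Bsh_carrier by auto

lemma LQ_carrier: "LQ \<in> carrier_mat n n"
  unfolding LQ_def using Asq_carrier Bsh_carrier by auto

lemma adj_Asq: "adj Asq = Asq"
proof -
  have "adj Asq = msum n n (\<lambda>i. adj (Ash i * Ash i)) d"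
    unfolding Asq_def using Ash_carrier by (intro adj_msum mult_carrier_mat[of _ n n _ n]) auto
  also have "\<dots> = Asq"
    unfolding Asq_def using Ash_carrier by (intro msum_cong) (simp add: adj_mult[of _ n n _ n] adj_Ash)
  finally show ?thesis .
qed

lemma hermitian_RQ: "hermitian RQ"
  using RQ_carrier adj_add[OF Asq_carrier mult_carrier_mat[OF adj_carrier[OF Bsh_carrier] Bsh_carrier]]
  unfolding hermitian_def RQ_def by (simp add: adj_Asq adj_mult[OF adj_carrier[OF Bsh_carrier] Bsh_carrier])

lemma hermitian_LQ: "hermitian LQ"
  using LQ_carrier adj_add[OF Asq_carrier mult_carrier_mat[OF Bsh_carrier adj_carrier[OF Bsh_carrier]]]
  unfolding hermitian_def LQ_def by (simp add: adj_Asq adj_mult[OF Bsh_carrier adj_carrier[OF Bsh_carrier]])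

lemma Qblock_carrier: "Qblock \<in> carrier_mat (2*m*n) (2*m*n)"
  unfolding Qblock_def using RQ_carrier LQ_carrier by (intro add_carrier_mat kron_carrier_2mn) auto

lemma hermitian_Qblock: "hermitian Qblock"
  using Qblock_carrier hermitian_RQ hermitian_LQ
    adj_add[OF kron_carrier_2mn[OF RQ_carrier projP_carrier] kron_carrier_2mn[OF LQ_carrier projQ_carrier]]
  unfolding hermitian_def Qblock_def
  by (simp add: adj_kron adj_projP adj_projQ carrier_matD[OF projP_carrier] carrier_matD[OF projQ_carrier])

lemma qform_Asq_nonneg:
  assumes w: "w \<in> carrier_vec n"
  shows "0 \<le> Re (qform Asq w)"
proof -
  have "qform Asq w = (\<Sum>i<d. qform (adj (Ash i) * Ash i) w)"
    unfolding Asq_def using Ash_carrier w by (simp add: qform_msum[of _ _ n] adj_Ash mult_carrier_mat[of _ n n _ n])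
  also have "\<dots> = (\<Sum>i<d. of_real ((vnorm (Ash i *\<^sub>v w))\<^sup>2))"
    using Ash_carrier w by (intro sum.cong refl qform_adj_mult_self) auto
  finally show ?thesis
    by (simp add: sum_nonneg)
qed

lemma qform_RQ_nonneg:
  assumes w: "w \<in> carrier_vec n"
  shows "0 \<le> Re (qform RQ w)"
  unfolding RQ_def qform_add[OF Asq_carrier mult_carrier_mat[OF adj_carrier[OF Bsh_carrier] Bsh_carrier] w]
  using qform_Asq_nonneg[OF w] qform_adj_mult_self[OF Bsh_carrier w] by simp

lemma qform_LQ_nonneg:
  assumes w: "w \<in> carrier_vec n"
  shows "0 \<le> Re (qform LQ w)"
  unfolding LQ_def qform_add[OF Asq_carrier mult_carrier_mat[OF Bsh_carrier adj_carrier[OF Bsh_carrier]] w]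
  using qform_Asq_nonneg[OF w] qform_adj_mult_self[OF adj_carrier[OF Bsh_carrier] w] by simp

lemma lambda_min_Qblock:
  assumes "0 < n" "0 < m"
  shows "lambda_min Qblock = min (lambda_min RQ) (lambda_min LQ)"
  unfolding Qblock_def using assms
  by (intro lambda_min_kron_split[where s = "2*m" and p = "\<lambda>b. b < m" and b_in = 0 and b_out = m])
    (simp_all add: RQ_carrier LQ_carrier hermitian_RQ hermitian_LQ index_projP index_projQ)

lemma lambda_min_quad_mat:
  assumes "0 < n"
  shows "lambda_min (quad_mat n d A B lam nu) = min (lambda_min RQ) (lambda_min LQ)"
proof -
  have "quad_mat n d A B lam nu = kron RQ (mat 2 2 (\<lambda>(i,j). if i = 0 \<and> j = 0 then 1 else 0))
      + kron LQ (mat 2 2 (\<lambda>(i,j). if i = 1 \<and> j = 1 then 1 else 0))"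
    unfolding quad_mat_def Let_def RQ_def LQ_def Asq_def ..
  also have "lambda_min \<dots> = min (lambda_min RQ) (lambda_min LQ)"
    using assms by (intro lambda_min_kron_split[where s = 2 and p = "\<lambda>b. b = 0" and b_in = 0 and b_out = 1])
      (auto simp: RQ_carrier LQ_carrier hermitian_RQ hermitian_LQ)
  finally show ?thesis .
qed

lemma lambda_min_quad_mat_nonneg:
  assumes "0 < n"
  shows "0 \<le> lambda_min (quad_mat n d A B lam nu)"
  unfolding lambda_min_quad_mat[OF assms]
  using lambda_min_nonneg[OF RQ_carrier assms hermitian_RQ qform_RQ_nonneg]
    lambda_min_nonneg[OF LQ_carrier assms hermitian_LQ qform_LQ_nonneg] by simp

end

theorem mainTheorem12:
  fixes n d m :: nat and \<Gamma> A :: "nat \<Rightarrow> complex mat" and B :: "complex mat"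
    and lam :: "nat \<Rightarrow> real" and nu :: complex
  assumes "0 < n" and "0 < d" and "0 < m"
    and "clifford_rep d m \<Gamma>"
    and "\<forall>i<d. A i \<in> carrier_mat n n \<and> hermitian (A i)"
    and "B \<in> carrier_mat n n"
  shows "\<bar>clifford_gap n d m \<Gamma> A B lam nu - quad_gap n d A B lam nu\<bar>
     \<le> sqrt ((\<Sum>i<d. \<Sum>j\<in>{i<..<d}. opnorm (A i * A j - A j * A i))
              + opnorm (Fmat n d m \<Gamma> A B lam nu))"
proof -
  interpret localizer_data n d m \<Gamma> A B lam nu
    using assms by unfold_locales
  let ?L = "localizer n d m \<Gamma> A B lam nu"
  have N: "0 < 2*m*n"
    using assms by simp
  have LL: "adj ?L * ?L \<in> carrier_mat (2*m*n) (2*m*n)" "hermitian (adj ?L * ?L)"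
    using localizer_carrier by (auto intro: hermitian_adj_mult_self)
  have "\<bar>lambda_min (adj ?L * ?L) - lambda_min (quad_mat n d A B lam nu)\<bar>
      \<le> (\<Sum>i<d. \<Sum>j\<in>{i<..<d}. opnorm (A i * A j - A j * A i)) + opnorm (Fmat n d m \<Gamma> A B lam nu)"
    using abs_lambda_min_diff_le[OF LL Qblock_carrier hermitian_Qblock N cmod_qform_localizer_square_diff_le[OF \<open>0 < n\<close>]]
    unfolding lambda_min_Qblock[OF \<open>0 < n\<close> \<open>0 < m\<close>] lambda_min_quad_mat[OF \<open>0 < n\<close>] .
  moreover have "0 \<le> lambda_min (adj ?L * ?L)"
    using lambda_min_nonneg[OF LL(1) N LL(2)] localizer_carrier by (simp add: qform_adj_mult_self)
  ultimately show ?thesis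
    unfolding clifford_gap_def sigma_min_def quad_gap_def
    using lambda_min_quad_mat_nonneg[OF \<open>0 < n\<close>] by (intro abs_sqrt_diff_le) auto
qed

end
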